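(* Assume (A) and (N) hold with $\omega_A<0$, and let $G:H_0\to H$ be globally Lipschitz and of class $C^1$. Then for every $t>0$ and $\omega$, the map $\xi\mapsto\tilde\phi^t_\omega(\xi)$ is Fréchet differentiable at every $\xi\in H_0$, and for any $\beta\in(1-1/p^*,1)$ the derivative at $\xi$ in the direction $\eta\in H_0$ satisfies $$D_\xi\tilde\phi^t_\omega[\eta]=T_0(t)\eta+\int_0^t(-A_0)^\beta T_0(t-s)(-A)^{-\beta}DG_{\tilde\phi^s_\omega(\xi)}\big(D_\xi\tilde\phi^s_\omega[\eta]\big)\,\mathrm{d}s.$$
   Context: Let $H$ be a separable Hilbert space and $A:D(A)\subset H\to H$ a linear operator with $H_0:=\overline{D(A)}\neq H$. The part of $A$ in $H_0$ is $A_0y:=Ay$ on $D(A_0):=\{y\in D(A):Ay\in H_0\}$. Assumption (A): (a) $A_0$ is sectorial on $H_0$, i.e. there are $\bar\omega\in\mathbb{R}$, $\vartheta\in(\pi/2,\pi)$, $\bar M>0$ with $\rho(A_0)\supset S_\vartheta:=\{z\in\mathbb{C}\setminus\{\bar\omega\}:|\arg(z-\bar\omega)|\le\vartheta\}$ and $\|(\lambda-A_0)^{-1}\|\le\bar M/|\lambda-\bar\omega|$ for $\lambda\in S_\vartheta$; (b) there exist $\omega_A\in\mathbb{R}$ and $p^*\in[1,\infty)$ with $(\omega_A,\infty)\subset\rho(A)$ and $\limsup_{\lambda\to+\infty}\lambda^{1/p^*}\|(\lambda I-A)^{-1}\|_{\mathcal{L}(H)}<\infty$. Under (A), $A_0$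 generates an analytic $C_0$-semigroup $(T_0(t))_{t\ge0}$ on $H_0$ and $A$ generates the integrated semigroup $S_A(t)=(\nu I-A_0)\int_0^tT_0(s)\,\mathrm{d}s\,(\nu I-A)^{-1}$; for $t>0$, $S_A'(t)x=(-A_0)^\beta T_0(t)(-A)^{-\beta}x$ ($x\in H$, $\beta\in(1-1/p^*,1)$), with $\|(-A)^{-\beta}\|<\infty$ and $\|(-A_0)^\beta T_0(t)\|\le M_\beta t^{-\beta}e^{\omega_At}$. Assumption (N): $(\Omega,\mathcal{F},\mathbb{P},(\theta_t)_{t\in\mathbb{R}})$ is an ergodic metric dynamical system and $W$ is a two-sided $Q$-Wiener process on $H$ ($Q$ trace class) with $W_t(\theta_s\omega)=W_{t+s}(\omega)-W_s(\omega)$. For $\omega_A<0$, $Y_\omega(t):=\int_{-\infty}^tS_A'(t-\tau)\,\mathrm{d}W(\tau)$ ($H_0$-valued, continuous, $Y_{\theta_t\omega}(s)=Y_\omega(t+s)$). The cocycle $\tilde\phi$: for $\xi\in H_0$, $t\ge0$, $\tilde\phi^t_\omega(\xi):=V(t)+Y_\omega(t)$, where $V\in C([0,\infty),H_0)$ is the unique solution of $V(t)=T_0(t)(\xi-Y_\omega(0))+\int_0^t(-A_0)^\beta T_0(t-s)(-A)^{-\beta}G(V(s)+Y_\omega(s))\,\mathrm{d}s$; it is the mild solution of $\mathrm{d}X=AX\,\mathrm{d}t+G(X)\,\mathrm{d}t+\mathrm{d}W$, $X(0)=\xi$. *)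

theory Defs
  imports "HOL-Analysis.Analysis"
begin

text \<open>Mild formulation: \<open>V\<close> solves, on \<open>[0,\<infinity>)\<close>,
  V(t) = T0(t)(xi - Y(0)) + int_0^t S'(t-s) G(V(s)+Y(s)) ds,
  where \<open>K t = S_A'(t) = (-A0)^beta T0(t) (-A)^(-beta)\<close> (Bochner integral).\<close>

definition mild_sol ::
  "(real \<Rightarrow> 'a::{real_inner,banach,second_countable_topology} \<Rightarrow>\<^sub>L 'a) \<Rightarrow>
   (real \<Rightarrow> 'a \<Rightarrow>\<^sub>L 'a) \<Rightarrow> ('a \<Rightarrow> 'a) \<Rightarrow> 'a set \<Rightarrow> (real \<Rightarrow> 'a) \<Rightarrow> 'a \<Rightarrow>
   (real \<Rightarrow> 'a) \<Rightarrow> bool" where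
  "mild_sol T0 K G H0 Y \<xi> V \<longleftrightarrow>
     continuous_on {0..} V \<and> V ` {0..} \<subseteq> H0 \<and>
     (\<forall>t\<ge>0. V t = T0 t (\<xi> - Y 0) +
                 (LINT s:{0..t}|lborel. K (t - s) (G (V s + Y s))))"

definition cocycle ::
  "(real \<Rightarrow> 'a::{real_inner,banach,second_countable_topology} \<Rightarrow>\<^sub>L 'a) \<Rightarrow>
   (real \<Rightarrow> 'a \<Rightarrow>\<^sub>L 'a) \<Rightarrow> ('a \<Rightarrow> 'a) \<Rightarrow> 'a set \<Rightarrow> (real \<Rightarrow> 'a) \<Rightarrow> real \<Rightarrow> 'a \<Rightarrow> 'a" where
  "cocycle T0 K G H0 Y t \<xi> =
     (THE x. \<exists>V. mild_sol T0 K G H0 Y \<xi> V \<and> x = V t) + Y t"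

end

(* The mild solution V solves a Volterra equation V = f + K * G(V + Y) whose kernel
   K(t) = (-A0)^beta T0(t) (-A)^(-beta) is weakly singular: |K(t)| <= C t^(-beta) with beta < 1.
   Weighting by exp(-l t) for l large makes the convolution with such a kernel a 1/2-contraction,
   which gives existence (Banach's fixed point theorem), uniqueness and a Gronwall inequality.
   The candidate derivative in direction eta is the solution Z of the linearized equation
   Z = T0(.) eta + K * DG(phi) Z. The remainder phi(zeta) - phi(xi) - Z solves the same linear
   equation forced by the linearization error of G along the compact orbit phi([0,t]), which is
   uniformly o(|zeta - xi|) since DG is continuous; Gronwall turns this into o(|zeta - xi|) for
   the remainder. The uniform bound on T0 over [0,t] needed here comes from Banach-Steinhaus, and
   since a Frechet derivative must be a bounded linear map on the whole space, the derivative on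
   H0 is extended by the orthogonal projection onto H0. *)

theory Submission
  imports Defs
begin

section \<open>Integrals against the kernel (t - s) powr (-a)\<close>

lemma has_integral_singular_kernel:
  fixes a t :: real
  assumes a: "a < 1" and t: "0 \<le> t"
  shows "((\<lambda>s. (t - s) powr (-a)) has_integral (t powr (1 - a) / (1 - a))) {0..t}"
proof -
  define F where "F s = - ((t - s) powr (1 - a) / (1 - a))" for s
  have "((\<lambda>s. (t - s) powr (-a)) has_integral (F t - F 0)) {0..t}"
  proof (rule fundamental_theorem_of_calculus_interior)
    show "continuous_on {0..t} F"
      unfolding F_def using a by (intro continuous_intros continuous_on_powr') auto
    fix x assume x: "x \<in> {0<..<t}"
    have "(F has_real_derivative (t - x) powr (-a)) (at x)"
      unfolding F_def using a x by (auto intro!: derivative_eq_intros)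
    then show "(F has_vector_derivative (t - x) powr (-a)) (at x)"
      by (simp add: has_real_derivative_iff_has_vector_derivative)
  qed (use t in auto)
  moreover have "F t - F 0 = t powr (1 - a) / (1 - a)"
    unfolding F_def using a by simp
  ultimately show ?thesis by simp
qed

lemma
  fixes a t :: real
  assumes a: "a < 1" and t: "0 \<le> t"
  shows singular_kernel_integrable: "set_integrable lborel {0..t} (\<lambda>s. (t - s) powr (-a))"
    and singular_kernel_integral: "(LINT s:{0..t}|lborel. (t - s) powr (-a)) = t powr (1 - a) / (1 - a)"
proof -
  let ?f = "\<lambda>s. indicator {0..t} s * (t - s) powr (-a)"
  have "((\<lambda>s. if s \<in> {0..t} then (t - s) powr (-a) else 0) has_integral (t powr (1 - a) / (1 - a))) UNIV"
    by (subst has_integral_restrict_UNIV) (rule has_integral_singular_kernel[OF a t])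
  moreover have "(\<lambda>s. if s \<in> {0..t} then (t - s) powr (-a) else 0) = ?f"
    by (auto simp: indicator_def)
  ultimately have hi: "(?f has_integral (t powr (1 - a) / (1 - a))) UNIV"
    by simp
  have m: "?f \<in> borel_measurable borel"
    by (intro borel_measurable_times borel_measurable_indicator powr_real_measurable
        borel_measurable_diff) auto
  have "integral\<^sup>N lborel ?f = t powr (1 - a) / (1 - a)"
    by (rule nn_integral_has_integral_lborel[OF m _ hi]) (auto simp: indicator_def)
  then have int: "integrable lborel ?f"
    using m by (intro integrableI_nonneg) (auto simp: indicator_def)
  then show "set_integrable lborel {0..t} (\<lambda>s. (t - s) powr (-a))"
    by (simp add: set_integrable_def)
  have "(?f has_integral (integral\<^sup>L lborel ?f)) UNIV"
    by (rule has_integral_integral_real[OF int])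
  with hi show "(LINT s:{0..t}|lborel. (t - s) powr (-a)) = t powr (1 - a) / (1 - a)"
    by (simp add: set_lebesgue_integral_def has_integral_unique)
qed

lemma integrable_indicator_powr_neg:
  fixes a t :: real
  assumes a: "a < 1" and t: "0 \<le> t"
  shows "integrable lborel (\<lambda>s. indicator {0..t} s * s powr (-a))"
proof -
  let ?f = "\<lambda>s. indicator {0..t} s * s powr (-a)"
  have "((\<lambda>s. if s \<in> {0..t} then s powr (-a) else 0) has_integral (t powr (-a + 1) / (-a + 1))) UNIV"
    by (subst has_integral_restrict_UNIV) (rule has_integral_powr_from_0, use a t in auto)
  moreover have "(\<lambda>s. if s \<in> {0..t} then s powr (-a) else 0) = ?f"
    by (auto simp: indicator_def)
  ultimately have hi: "(?f has_integral (t powr (-a + 1) / (-a + 1))) UNIV"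
    by simp
  have m: "?f \<in> borel_measurable borel"
    by (intro borel_measurable_times borel_measurable_indicator powr_real_measurable) auto
  have "integral\<^sup>N lborel ?f = t powr (-a + 1) / (-a + 1)"
    by (rule nn_integral_has_integral_lborel[OF m _ hi]) (auto simp: indicator_def)
  then show ?thesis
    using m by (intro integrableI_nonneg) (auto simp: indicator_def)
qed

lemma borel_measurable_indicator_Icc_scaleR:
  fixes f :: "real \<Rightarrow> 'b::{banach,second_countable_topology}"
  assumes "continuous_on {a<..<b} f"
  shows "(\<lambda>s. indicator {a..b} s *\<^sub>R f s) \<in> borel_measurable borel"
proof -
  have "(\<lambda>s. indicator {a..b} s *\<^sub>R f s) =
    (\<lambda>s. indicator {a<..<b} s *\<^sub>R f s + indicator ({a..b} \<inter> {a}) s *\<^sub>R f a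
        + indicator ({a..b} \<inter> {b} - {a}) s *\<^sub>R f b)"
    by (rule ext) (auto simp: indicator_def)
  moreover have "(\<lambda>s. indicator {a<..<b} s *\<^sub>R f s) \<in> borel_measurable borel"
    by (rule borel_measurable_continuous_on_indicator) (use assms in auto)
  ultimately show ?thesis
    by (simp del: Int_iff)
qed

lemma set_integrable_singular_kernel_mult:
  fixes h :: "real \<Rightarrow> real"
  assumes a: "a < 1" and t: "0 \<le> t" and h: "continuous_on {0..t} h"
  shows "set_integrable lborel {0..t} (\<lambda>s. (t - s) powr (-a) * h s)"
proof -
  obtain B where "B \<ge> 0" and B: "\<And>s. s \<in> {0..t} \<Longrightarrow> norm (h s) \<le> B"
    using continuous_on_compact_bound[OF compact_Icc h] by blast
  have int: "set_integrable lborel {0..t} (\<lambda>s. B * (t - s) powr (-a))"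
    using singular_kernel_integrable[OF a t] by (rule set_integrable_mult_right)
  have "(\<lambda>s. (t - s) powr (-a) * (indicator {0..t} s *\<^sub>R h s)) \<in> borel_measurable borel"
    by (intro borel_measurable_times powr_real_measurable borel_measurable_diff
        borel_measurable_continuous_on_indicator h) auto
  then have m: "(\<lambda>s. indicator {0..t} s *\<^sub>R ((t - s) powr (-a) * h s)) \<in> borel_measurable lborel"
    by (simp add: indicator_scaleR_eq_if mult_ac cong: if_cong)
  show ?thesis
    unfolding set_integrable_def
  proof (rule Bochner_Integration.integrable_bound[OF int[unfolded set_integrable_def] m], rule AE_I2)
    fix s
    show "norm (indicator {0..t} s *\<^sub>R ((t - s) powr - a * h s))
        \<le> norm (indicator {0..t} s *\<^sub>R (B * (t - s) powr - a))"
    proof (cases "s \<in> {0..t}")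
      case True
      then have "\<bar>h s\<bar> * (t - s) powr -a \<le> B * (t - s) powr -a"
        using B[of s] by (intro mult_right_mono) auto
      then show ?thesis
        using True \<open>B \<ge> 0\<close> by (simp add: abs_mult mult.commute)
    qed simp
  qed
qed

lemma set_integral_Icc_cong_upper:
  fixes f g :: "real \<Rightarrow> 'b::{banach,second_countable_topology}"
  assumes "\<And>s. s \<in> {a..<b} \<Longrightarrow> f s = g s"
  shows "(LINT s:{a..b}|lborel. f s) = (LINT s:{a..b}|lborel. g s)"
  unfolding set_lebesgue_integral_def
  using assms by (intro integral_discrete_difference[where X="{b}"]) (auto simp: indicator_def)

lemma tendsto_indicator_atLeastAtMost_scaleR:
  fixes f :: "nat \<Rightarrow> 'b::real_normed_vector" and x :: "nat \<Rightarrow> real"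
  assumes x: "x \<longlonglongrightarrow> a" and f: "f \<longlonglongrightarrow> l" and r: "r \<noteq> a"
  shows "(\<lambda>i. indicator {0..x i} r *\<^sub>R f i) \<longlonglongrightarrow> indicator {0..a} r *\<^sub>R l"
proof -
  have "eventually (\<lambda>i. indicator {0..x i} r = (indicator {0..a} r :: real)) sequentially"
  proof (cases "r < a")
    case True
    then have "eventually (\<lambda>i. r < x i) sequentially"
      using x by (simp add: order_tendsto_iff)
    then show ?thesis
      by eventually_elim (use True in \<open>auto simp: indicator_def\<close>)
  next
    case False
    with r have "eventually (\<lambda>i. x i < r) sequentially"
      using x by (simp add: order_tendsto_iff)
    then show ?thesis
      by eventually_elim (use False r in \<open>auto simp: indicator_def\<close>)
  qed
  then have "eventually (\<lambda>i. indicator {0..a} r *\<^sub>R f i = indicator {0..x i} r *\<^sub>R f i) sequentially"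
    by eventually_elim simp
  then show ?thesis
    by (rule Lim_transform_eventually[OF tendsto_scaleR[OF tendsto_const f]])
qed

section \<open>A Gronwall lemma for weakly singular kernels\<close>

lemma exp_neg_le_powr_neg:
  fixes x \<gamma> :: real
  assumes x: "0 < x" and \<gamma>: "0 < \<gamma>" "\<gamma> \<le> 1"
  shows "exp (-x) \<le> x powr (-\<gamma>)"
proof -
  have "x powr \<gamma> \<le> exp x"
  proof (cases "x \<le> 1")
    case True
    then have "x powr \<gamma> \<le> 1" using x \<gamma> by (intro powr_le1) auto
    then show ?thesis using x by (meson one_le_exp_iff less_imp_le order_trans)
  next
    case False
    then have "x powr \<gamma> \<le> x" using \<gamma> x by (metis powr_mono powr_one not_le less_imp_le)
    with exp_ge_add_one_self[of x] show ?thesis by linarith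
  qed
  then show ?thesis
    using x by (simp add: exp_minus powr_minus le_imp_inverse_le)
qed

lemma singular_kernel_exp_integral_le:
  fixes \<beta> l t :: real
  assumes \<beta>: "0 \<le> \<beta>" "\<beta> < 1" and l: "0 < l" and t: "0 \<le> t"
  defines "\<gamma> \<equiv> (1 - \<beta>) / 2"
  shows "(LINT s:{0..t}|lborel. (t - s) powr (-\<beta>) * exp (-l * (t - s))) \<le> l powr (-\<gamma>) * (t powr \<gamma> / \<gamma>)"
proof -
  have \<gamma>: "0 < \<gamma>" "\<gamma> \<le> 1" "\<beta> + \<gamma> < 1" "1 - (\<beta> + \<gamma>) = \<gamma>"
    using \<beta> by (auto simp: \<gamma>_def field_simps)
  have "(LINT s:{0..t}|lborel. (t - s) powr (-\<beta>) * exp (-l * (t - s)))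
      \<le> (LINT s:{0..t}|lborel. l powr (-\<gamma>) * (t - s) powr (-(\<beta> + \<gamma>)))"
  proof (rule set_integral_mono)
    show "set_integrable lborel {0..t} (\<lambda>s. (t - s) powr (-\<beta>) * exp (-l * (t - s)))"
      using \<beta> t by (intro set_integrable_singular_kernel_mult continuous_intros) auto
    show "set_integrable lborel {0..t} (\<lambda>s. l powr (-\<gamma>) * (t - s) powr (-(\<beta> + \<gamma>)))"
      using \<gamma>(3) t by (intro set_integrable_mult_right singular_kernel_integrable)
    fix s assume s: "s \<in> {0..t}"
    show "(t - s) powr (-\<beta>) * exp (-l * (t - s)) \<le> l powr (-\<gamma>) * (t - s) powr (-(\<beta> + \<gamma>))"
    proof (cases "s = t")
      case False
      then have r: "0 < t - s" using s by auto
      have "exp (-(l * (t - s))) \<le> (l * (t - s)) powr (-\<gamma>)"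
        using r l \<gamma> by (intro exp_neg_le_powr_neg) auto
      then have "(t - s) powr (-\<beta>) * exp (-l * (t - s)) \<le> (t - s) powr (-\<beta>) * ((l * (t - s)) powr (-\<gamma>))"
        by (intro mult_left_mono) auto
      also have "\<dots> = l powr (-\<gamma>) * (t - s) powr (-(\<beta> + \<gamma>))"
        using r l by (simp add: powr_mult powr_add[symmetric] mult_ac)
      finally show ?thesis .
    qed simp
  qed
  also have "\<dots> = l powr (-\<gamma>) * (t powr \<gamma> / \<gamma>)"
    using singular_kernel_integral[OF \<gamma>(3) t] \<gamma>(4) by simp
  finally show ?thesis .
qed

(* chosen so that k * l powr (-\<gamma>) * T powr \<gamma> / \<gamma> \<le> 1/2, where \<gamma> = (1 - \<beta>)/2 *)
definition exp_weight_rate :: "real \<Rightarrow> real \<Rightarrow> real \<Rightarrow> real" where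
  "exp_weight_rate \<beta> k T = (let \<gamma> = (1 - \<beta>) / 2 in (2 * (k * T powr \<gamma> / \<gamma>) + 1) powr (1 / \<gamma>))"

lemma exp_weight_rate_pos:
  assumes "0 \<le> k" "\<beta> < 1"
  shows "0 < exp_weight_rate \<beta> k T"
proof -
  have "0 \<le> k * T powr ((1 - \<beta>) / 2) / ((1 - \<beta>) / 2)"
    using assms by simp
  then show ?thesis
    by (simp add: exp_weight_rate_def Let_def)
qed

lemma singular_kernel_exp_integral_half:
  fixes \<beta> k t T :: real
  assumes \<beta>: "0 \<le> \<beta>" "\<beta> < 1" and k: "0 \<le> k" and t: "t \<in> {0..T}"
  defines "l \<equiv> exp_weight_rate \<beta> k T"
  shows "k * (LINT s:{0..t}|lborel. (t - s) powr (-\<beta>) * exp (-l * (t - s))) \<le> 1/2"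
proof -
  define \<gamma> where "\<gamma> = (1 - \<beta>) / 2"
  have \<gamma>: "0 < \<gamma>" using \<beta> by (simp add: \<gamma>_def)
  define Q where "Q = k * T powr \<gamma> / \<gamma>"
  have Q: "0 \<le> Q" using k \<gamma> by (simp add: Q_def)
  have l_def': "l = (2 * Q + 1) powr (1 / \<gamma>)"
    by (simp add: l_def exp_weight_rate_def Let_def Q_def \<gamma>_def)
  have l: "0 < l" using Q by (simp add: l_def')
  have "l powr \<gamma> = 2 * Q + 1" using Q \<gamma> by (simp add: l_def' powr_powr)
  then have l_powr: "l powr (-\<gamma>) = 1 / (2 * Q + 1)" using l by (simp add: powr_minus_divide)
  have "k * (LINT s:{0..t}|lborel. (t - s) powr (-\<beta>) * exp (-l * (t - s)))
      \<le> k * (l powr (-\<gamma>) * (t powr \<gamma> / \<gamma>))"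
    using singular_kernel_exp_integral_le[OF \<beta> l, of t] t k by (intro mult_left_mono) (auto simp: \<gamma>_def)
  also have "\<dots> \<le> k * (l powr (-\<gamma>) * (T powr \<gamma> / \<gamma>))"
    using t k \<gamma> by (intro mult_left_mono divide_right_mono powr_mono2) auto
  also have "\<dots> = Q / (2 * Q + 1)" using l_powr by (simp add: Q_def)
  also have "\<dots> \<le> 1/2" using Q by (simp add: field_simps)
  finally show ?thesis .
qed

lemma singular_kernel_exp_weight:
  fixes \<beta> l m t :: real
  shows "(LINT s:{0..t}|lborel. (t - s) powr (-\<beta>) * (exp (l * s) * m))
    = m * exp (l * t) * (LINT s:{0..t}|lborel. (t - s) powr (-\<beta>) * exp (-l * (t - s)))"
proof -
  have "exp (l * s) = exp (l * t) * exp (-l * (t - s))" for s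
    by (simp flip: exp_add add: algebra_simps)
  then have "(LINT s:{0..t}|lborel. (t - s) powr (-\<beta>) * (exp (l * s) * m))
      = (LINT s:{0..t}|lborel. m * exp (l * t) * ((t - s) powr (-\<beta>) * exp (-l * (t - s))))"
    by (simp add: mult_ac)
  also have "\<dots> = m * exp (l * t) * (LINT s:{0..t}|lborel. (t - s) powr (-\<beta>) * exp (-l * (t - s)))"
    by (rule set_integral_mult_right)
  finally show ?thesis .
qed

lemma singular_gronwall_exp_weighted:
  fixes \<beta> k l a T :: real
  assumes \<beta>: "0 \<le> \<beta>" "\<beta> < 1" and k: "0 \<le> k" and a: "0 \<le> a" and l: "0 \<le> l"
    and small: "\<And>t. t \<in> {0..T} \<Longrightarrow> k * (LINT s:{0..t}|lborel. (t - s) powr (-\<beta>) * exp (-l * (t - s))) \<le> 1/2"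
    and w: "continuous_on {0..T} w"
    and hyp: "\<And>t. t \<in> {0..T} \<Longrightarrow> w t \<le> a + k * (LINT s:{0..t}|lborel. (t - s) powr (-\<beta>) * w s)"
    and t: "t \<in> {0..T}"
  shows "exp (-l * t) * w t \<le> 2 * a"
proof -
  \<comment> \<open>the maximum m of exp (-l s) * w s over [0,T] satisfies m \<le> a + m/2\<close>
  define \<phi> where "\<phi> s = exp (-l * s) * w s" for s
  obtain t0 where t0: "t0 \<in> {0..T}" and max: "\<And>s. s \<in> {0..T} \<Longrightarrow> \<phi> s \<le> \<phi> t0"
    using continuous_attains_sup[OF compact_Icc _ continuous_on_mult[OF _ w], of "\<lambda>s. exp (-l * s)"] t
    by (fastforce intro: continuous_intros simp: \<phi>_def)
  define m where "m = \<phi> t0"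
  have w_le: "w s \<le> exp (l * s) * m" if "s \<in> {0..T}" for s
    using max[OF that] by (simp add: m_def \<phi>_def exp_minus field_simps)
  have "m \<le> 2 * a"
  proof (cases "m \<le> 0")
    case False
    have "k * (LINT s:{0..t0}|lborel. (t0 - s) powr (-\<beta>) * w s)
        \<le> k * (LINT s:{0..t0}|lborel. (t0 - s) powr (-\<beta>) * (exp (l * s) * m))"
      using t0 w_le \<beta> k
      by (intro mult_left_mono set_integral_mono set_integrable_singular_kernel_mult
          continuous_intros continuous_on_subset[OF w]) (auto intro!: mult_left_mono)
    also have "\<dots> = m * exp (l * t0) * (k * (LINT s:{0..t0}|lborel. (t0 - s) powr (-\<beta>) * exp (-l * (t0 - s))))"
      by (subst singular_kernel_exp_weight) (simp add: mult_ac)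
    also have "\<dots> \<le> m * exp (l * t0) * (1/2)"
      using small[OF t0] False by (intro mult_left_mono) auto
    finally have "w t0 \<le> a + m * exp (l * t0) / 2" using hyp[OF t0] by simp
    then have "m \<le> exp (-l * t0) * (a + m * exp (l * t0) / 2)"
      unfolding m_def \<phi>_def by (intro mult_left_mono) auto
    also have "\<dots> = exp (-l * t0) * a + m / 2"
      by (simp add: algebra_simps flip: exp_add)
    also have "exp (-l * t0) * a \<le> a"
      using a l t0 by (intro mult_left_le_one_le) auto
    finally show ?thesis by simp
  qed (use a in simp)
  then show ?thesis
    using max[OF t] by (simp add: \<phi>_def m_def)
qed

lemma singular_gronwall:
  fixes \<beta> k a T :: real
  assumes \<beta>: "0 \<le> \<beta>" "\<beta> < 1" and k: "0 \<le> k" and a: "0 \<le> a" and w: "continuous_on {0..T} w"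
    and hyp: "\<And>t. t \<in> {0..T} \<Longrightarrow> w t \<le> a + k * (LINT s:{0..t}|lborel. (t - s) powr (-\<beta>) * w s)"
    and t: "t \<in> {0..T}"
  shows "w t \<le> 2 * exp (exp_weight_rate \<beta> k T * T) * a"
proof -
  let ?l = "exp_weight_rate \<beta> k T"
  have l: "0 < ?l" by (rule exp_weight_rate_pos[OF k \<beta>(2)])
  have "w t = exp (?l * t) * (exp (-?l * t) * w t)"
    by (simp flip: exp_add mult.assoc)
  also have "\<dots> \<le> exp (?l * t) * (2 * a)"
    using l singular_kernel_exp_integral_half[OF \<beta> k]
    by (intro mult_left_mono singular_gronwall_exp_weighted[OF \<beta> k a _ _ w hyp t]) auto
  also have "\<dots> \<le> exp (?l * T) * (2 * a)"
    using t l a by (intro mult_right_mono) auto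
  finally show ?thesis by simp
qed

section \<open>Orthogonal projection onto a closed subspace\<close>

lemma norm_diff_parallelogram_midpoint:
  fixes x a b :: "'a::real_inner"
  shows "(norm (a - b))\<^sup>2 =
    2 * (norm (x - a))\<^sup>2 + 2 * (norm (x - b))\<^sup>2 - 4 * (norm (x - (1/2) *\<^sub>R (a + b)))\<^sup>2"
  unfolding power2_norm_eq_inner by (simp add: inner_commute algebra_simps)

lemma Cauchy_minimizing_sequence_convex:
  fixes S :: "'a::real_inner set"
  assumes S: "convex S" and y: "\<And>n. y n \<in> S" and lim: "(\<lambda>n. dist x (y n)) \<longlonglongrightarrow> infdist x S"
  shows "Cauchy y"
proof (rule metric_CauchyI)
  fix r :: real assume r: "0 < r"
  define d where "d = infdist x S"
  have "eventually (\<lambda>n. (norm (x - y n))\<^sup>2 < d\<^sup>2 + r\<^sup>2 / 4) sequentially"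
    using tendsto_power[OF lim, of 2] r by (simp add: d_def dist_norm order_tendsto_iff)
  then obtain N where N: "\<And>n. n \<ge> N \<Longrightarrow> (norm (x - y n))\<^sup>2 < d\<^sup>2 + r\<^sup>2 / 4"
    by (auto simp: eventually_sequentially)
  show "\<exists>M. \<forall>m\<ge>M. \<forall>n\<ge>M. dist (y m) (y n) < r"
  proof (intro exI allI impI)
    fix m n assume m: "N \<le> m" and n: "N \<le> n"
    have "(1/2) *\<^sub>R (y m + y n) = (1/2) *\<^sub>R y m + (1 - 1/2) *\<^sub>R y n"
      by (simp add: scaleR_add_right)
    then have "(1/2) *\<^sub>R (y m + y n) \<in> S"
      using S y by (simp add: convex_def del: scaleR_half_double)
    then have "d \<le> norm (x - (1/2) *\<^sub>R (y m + y n))"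
      unfolding d_def by (metis infdist_le dist_norm)
    then have "d\<^sup>2 \<le> (norm (x - (1/2) *\<^sub>R (y m + y n)))\<^sup>2"
      by (intro power_mono) (auto simp: d_def infdist_nonneg)
    moreover have "\<And>A a b c :: real. A = 2 * a + 2 * b - 4 * c \<Longrightarrow> a < d\<^sup>2 + r\<^sup>2 / 4 \<Longrightarrow>
        b < d\<^sup>2 + r\<^sup>2 / 4 \<Longrightarrow> d\<^sup>2 \<le> c \<Longrightarrow> A < r\<^sup>2"
      by linarith
    ultimately have "(norm (y m - y n))\<^sup>2 < r\<^sup>2"
      using norm_diff_parallelogram_midpoint[of "y m" "y n" x] N[OF m] N[OF n] by blast
    then show "dist (y m) (y n) < r"
      using r by (simp add: dist_norm power_less_imp_less_base)
  qed
qed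

theorem nearest_point_exists_closed_convex:
  fixes S :: "'a::{real_inner,complete_space} set" and x :: 'a
  assumes S: "closed S" "convex S" "S \<noteq> {}"
  obtains p where "p \<in> S" "\<And>y. y \<in> S \<Longrightarrow> dist x p \<le> dist x y"
proof -
  define d where "d = infdist x S"
  have "\<exists>y\<in>S. dist x y < d + 1 / real (Suc n)" for n
  proof -
    have "bdd_below ((\<lambda>a. dist x a) ` S)" by (rule bdd_belowI[of _ 0]) auto
    moreover have "(INF a\<in>S. dist x a) < d + 1 / real (Suc n)"
      using infdist_notempty[OF S(3), of x] by (simp add: d_def)
    ultimately show ?thesis by (simp add: cINF_less_iff[OF S(3)])
  qed
  then obtain y where y: "\<And>n. y n \<in> S" and yd: "\<And>n. dist x (y n) < d + 1 / real (Suc n)"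
    by metis
  have lim: "(\<lambda>n. dist x (y n)) \<longlonglongrightarrow> d"
  proof (rule tendsto_sandwich[of "\<lambda>_. d" _ _ "\<lambda>n. d + 1 / real (Suc n)"])
    show "\<forall>\<^sub>F n in sequentially. d \<le> dist x (y n)" using y by (simp add: d_def infdist_le)
    show "\<forall>\<^sub>F n in sequentially. dist x (y n) \<le> d + 1 / real (Suc n)" using yd by (simp add: less_imp_le)
    show "(\<lambda>n. d + 1 / real (Suc n)) \<longlonglongrightarrow> d"
      using tendsto_add[OF tendsto_const LIMSEQ_Suc[OF lim_inverse_n']] by (simp add: inverse_eq_divide)
  qed simp
  then obtain p where yp: "y \<longlonglongrightarrow> p"
    using Cauchy_minimizing_sequence_convex[OF S(2) y] d_def convergent_eq_Cauchy[of y]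
    by (auto simp: convergent_def)
  show ?thesis
  proof
    show "p \<in> S" using closed_sequentially[OF S(1) _ yp] y by simp
    have "(\<lambda>n. dist x (y n)) \<longlonglongrightarrow> dist x p" by (intro tendsto_intros yp)
    with lim have "dist x p = d" by (rule LIMSEQ_unique[rotated])
    then show "\<And>z. z \<in> S \<Longrightarrow> dist x p \<le> dist x z" by (simp add: d_def infdist_le)
  qed
qed

lemma nearest_point_subspace_orthogonal:
  fixes S :: "'a::real_inner set"
  assumes S: "subspace S" and p: "p \<in> S" and near: "\<And>y. y \<in> S \<Longrightarrow> dist x p \<le> dist x y"
    and z: "z \<in> S"
  shows "inner (x - p) z = 0"
proof (cases "z = 0")
  case False
  define c where "c = inner (x - p) z / (norm z)\<^sup>2"
  have nz: "0 < (norm z)\<^sup>2" using False by simp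
  have "p + c *\<^sub>R z \<in> S" using S p z by (simp add: subspace_add subspace_scale)
  then have "norm (x - p) \<le> norm (x - (p + c *\<^sub>R z))"
    using near by (simp add: dist_norm)
  then have "(norm (x - p))\<^sup>2 \<le> (norm (x - p - c *\<^sub>R z))\<^sup>2"
    by (simp add: power_mono diff_diff_eq)
  also have "\<dots> = (norm (x - p))\<^sup>2 - 2 * c * inner (x - p) z + c\<^sup>2 * (norm z)\<^sup>2"
    unfolding power2_norm_eq_inner by (simp add: inner_commute algebra_simps power2_eq_square)
  also have "c\<^sup>2 * (norm z)\<^sup>2 = c * inner (x - p) z"
    using nz by (simp add: c_def power2_eq_square)
  finally have "(inner (x - p) z)\<^sup>2 / (norm z)\<^sup>2 \<le> 0"
    by (simp add: c_def power2_eq_square)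
  then show ?thesis using nz by (simp add: divide_le_0_iff)
qed simp

definition orth_proj :: "'a::real_inner set \<Rightarrow> 'a \<Rightarrow> 'a" where
  "orth_proj S x = (SOME p. p \<in> S \<and> (\<forall>y\<in>S. inner (x - p) y = 0))"

context
  fixes S :: "'a::{real_inner,complete_space} set"
  assumes S: "subspace S" "closed S"
begin

lemma
  shows orth_proj_in: "orth_proj S x \<in> S"
    and orth_proj_orthogonal: "y \<in> S \<Longrightarrow> inner (x - orth_proj S x) y = 0"
proof -
  have "S \<noteq> {}" using subspace_0[OF S(1)] by blast
  then obtain p where "p \<in> S" "\<And>y. y \<in> S \<Longrightarrow> dist x p \<le> dist x y"
    using nearest_point_exists_closed_convex[OF S(2) subspace_imp_convex[OF S(1)], where x=x] by blast
  then have "\<exists>p. p \<in> S \<and> (\<forall>y\<in>S. inner (x - p) y = 0)"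
    using nearest_point_subspace_orthogonal[OF S(1)] by blast
  from someI_ex[OF this] show "orth_proj S x \<in> S" "y \<in> S \<Longrightarrow> inner (x - orth_proj S x) y = 0"
    unfolding orth_proj_def by auto
qed

lemma orth_proj_eqI:
  assumes p: "p \<in> S" and orth: "\<And>y. y \<in> S \<Longrightarrow> inner (x - p) y = 0"
  shows "orth_proj S x = p"
proof -
  have d: "orth_proj S x - p \<in> S" using S(1) orth_proj_in p by (simp add: subspace_diff)
  have "inner (orth_proj S x - p) (orth_proj S x - p)
      = inner (x - p) (orth_proj S x - p) - inner (x - orth_proj S x) (orth_proj S x - p)"
    by (simp add: inner_diff_left)
  also have "\<dots> = 0" using orth[OF d] orth_proj_orthogonal[OF d] by simp
  finally show ?thesis by simp
qed

lemma orth_proj_id: "x \<in> S \<Longrightarrow> orth_proj S x = x"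
  by (rule orth_proj_eqI) auto

lemma norm_orth_proj_le: "norm (orth_proj S x) \<le> norm x"
proof -
  have "(norm (orth_proj S x))\<^sup>2 = inner x (orth_proj S x) - inner (x - orth_proj S x) (orth_proj S x)"
    by (simp add: inner_diff_left power2_norm_eq_inner)
  also have "\<dots> \<le> norm x * norm (orth_proj S x)"
    using orth_proj_orthogonal[OF orth_proj_in] norm_cauchy_schwarz by simp
  finally show ?thesis
    by (cases "orth_proj S x = 0") (auto simp: power2_eq_square mult_le_cancel_right)
qed

lemma bounded_linear_orth_proj: "bounded_linear (orth_proj S)"
proof (rule bounded_linear_intro[where K=1])
  fix x y :: 'a and r :: real
  show "orth_proj S (x + y) = orth_proj S x + orth_proj S y"
  proof (rule orth_proj_eqI)
    show "orth_proj S x + orth_proj S y \<in> S" using S(1) orth_proj_in by (simp add: subspace_add)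
    fix z assume z: "z \<in> S"
    have "x + y - (orth_proj S x + orth_proj S y) = (x - orth_proj S x) + (y - orth_proj S y)"
      by simp
    then show "inner (x + y - (orth_proj S x + orth_proj S y)) z = 0"
      using orth_proj_orthogonal[OF z, of x] orth_proj_orthogonal[OF z, of y] by (simp only: inner_add_left)
  qed
  show "orth_proj S (r *\<^sub>R x) = r *\<^sub>R orth_proj S x"
  proof (rule orth_proj_eqI)
    show "r *\<^sub>R orth_proj S x \<in> S" using S(1) orth_proj_in by (simp add: subspace_scale)
    fix z assume z: "z \<in> S"
    show "inner (r *\<^sub>R x - r *\<^sub>R orth_proj S x) z = 0"
      using orth_proj_orthogonal[OF z, of x] by (simp flip: scaleR_diff_right)
  qed
  show "norm (orth_proj S x) \<le> norm x * 1"
    using norm_orth_proj_le by simp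
qed

end

section \<open>Uniform boundedness on a closed subspace\<close>

lemma Baire_closed_cover_ball:
  fixes S :: "'a::complete_space set" and A :: "nat \<Rightarrow> 'a set"
  assumes S: "closed S" "S \<noteq> {}" and A: "\<And>n. closed (A n)" and cover: "S \<subseteq> (\<Union>n. A n)"
  obtains n x0 r where "x0 \<in> S" "0 < r" "\<And>x. x \<in> S \<Longrightarrow> dist x x0 < r \<Longrightarrow> x \<in> A n"
proof -
  let ?X = "top_of_set S"
  have "\<exists>n. ?X interior_of (S \<inter> A n) \<noteq> {}"
  proof (rule ccontr)
    assume "\<not> ?thesis"
    then have "?X interior_of (\<Union>n. S \<inter> A n) = {}"
      using completely_metrizable_space_closedin[OF completely_metrizable_space_euclidean
          S(1)[unfolded closed_closedin]] A
      by (intro Baire_category_alt) (auto intro: closedin_closed_Int)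
    moreover have "(\<Union>n. S \<inter> A n) = topspace ?X"
      using cover by auto
    ultimately show False
      using S(2) interior_of_topspace[of ?X] by simp
  qed
  then obtain n x0 where "x0 \<in> ?X interior_of (S \<inter> A n)"
    by blast
  then obtain U where U: "openin ?X U" "x0 \<in> U" "U \<subseteq> S \<inter> A n"
    unfolding interior_of_def by auto
  then obtain r where "0 < r" "\<And>x. x \<in> S \<Longrightarrow> dist x x0 < r \<Longrightarrow> x \<in> U"
    unfolding openin_euclidean_subtopology_iff by blast
  with U show ?thesis
    using that[of x0 r n] by blast
qed

lemma norm_blinfun_le_of_ball:
  fixes F :: "'a::real_normed_vector \<Rightarrow>\<^sub>L 'b::real_normed_vector"
  assumes S: "subspace S" and r: "0 < r" and small: "\<And>z. z \<in> S \<Longrightarrow> norm z < r \<Longrightarrow> norm (F z) \<le> M"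
    and x: "x \<in> S"
  shows "norm (F x) \<le> 2 * M / r * norm x"
proof (cases "x = 0")
  case False
  define c where "c = r / (2 * norm x)"
  have c: "0 < c" using False r by (simp add: c_def)
  have "c * norm (F x) = norm (F (c *\<^sub>R x))"
    using c by (simp add: blinfun.scaleR_right)
  also have "\<dots> \<le> M"
    using False r S x by (intro small) (auto simp: c_def subspace_scale)
  finally show ?thesis
    using c False r by (simp add: c_def field_simps)
qed simp

theorem uniform_boundedness_closed_subspace:
  fixes S :: "'a::banach set" and F :: "'i \<Rightarrow> 'a \<Rightarrow>\<^sub>L 'b::real_normed_vector"
  assumes S: "closed S" "subspace S" and pointwise: "\<And>x. x \<in> S \<Longrightarrow> \<exists>B. \<forall>i\<in>I. norm (F i x) \<le> B"
  obtains B where "0 \<le> B" "\<And>i x. i \<in> I \<Longrightarrow> x \<in> S \<Longrightarrow> norm (F i x) \<le> B * norm x"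
proof -
  define A where "A n = (\<Inter>i\<in>I. {x. norm (F i x) \<le> real n})" for n :: nat
  have "closed (A n)" for n
    unfolding A_def by (intro closed_INT ballI closed_Collect_le continuous_intros)
  moreover have "S \<subseteq> (\<Union>n. A n)"
  proof
    fix x assume "x \<in> S"
    then obtain B where "\<forall>i\<in>I. norm (F i x) \<le> B" using pointwise by blast
    moreover obtain n :: nat where "B \<le> real n" using real_arch_simple by blast
    ultimately have "x \<in> A n" unfolding A_def by (auto intro: order_trans)
    then show "x \<in> (\<Union>n. A n)" by blast
  qed
  moreover have "S \<noteq> {}" using subspace_0[OF S(2)] by blast
  ultimately obtain n x0 r where x0: "x0 \<in> S" and r: "0 < r" and ball: "\<And>x. x \<in> S \<Longrightarrow> dist x x0 < r \<Longrightarrow> x \<in> A n"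
    using Baire_closed_cover_ball[OF S(1)] by metis
  have small: "norm (F i z) \<le> 2 * real n" if i: "i \<in> I" and z: "z \<in> S" "norm z < r" for i z
  proof -
    have "x0 + z \<in> A n" "x0 \<in> A n"
      using ball[of "x0 + z"] ball[of x0] x0 z r S(2) by (auto simp: subspace_add dist_norm)
    then have "norm (F i (x0 + z)) \<le> real n" "norm (F i x0) \<le> real n"
      using i unfolding A_def by auto
    moreover have "norm (F i z) \<le> norm (F i (x0 + z)) + norm (F i x0)"
      using norm_triangle_ineq4[of "F i (x0 + z)" "F i x0"] by (simp add: blinfun.add_right)
    ultimately show ?thesis by simp
  qed
  show ?thesis
  proof (rule that[of "2 * (2 * real n) / r"])
    show "norm (F i x) \<le> 2 * (2 * real n) / r * norm x" if "i \<in> I" "x \<in> S" for i x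
      using norm_blinfun_le_of_ball[OF S(2) r small] that by blast
  qed (use r in simp)
qed

section \<open>Uniform linearization on compact sets\<close>

lemma continuous_on_uniformly_near_compact:
  fixes f :: "'a::metric_space \<Rightarrow> 'b::metric_space"
  assumes f: "continuous_on S f" and P: "compact P" "P \<subseteq> S" and e: "0 < e"
  obtains d where "0 < d" "\<And>p y. p \<in> P \<Longrightarrow> y \<in> S \<Longrightarrow> dist y p < d \<Longrightarrow> dist (f y) (f p) < e"
proof -
  have "\<forall>p\<in>P. \<exists>d>0. \<forall>y\<in>S. dist y p < d \<longrightarrow> dist (f y) (f p) < e / 2"
    using f P(2) e unfolding continuous_on_iff by (meson half_gt_zero subsetD)
  then obtain d where d: "\<And>p. p \<in> P \<Longrightarrow> 0 < d p"
    and close: "\<And>p y. p \<in> P \<Longrightarrow> y \<in> S \<Longrightarrow> dist y p < d p \<Longrightarrow> dist (f y) (f p) < e / 2"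
    by metis
  have "P \<subseteq> (\<Union>p\<in>P. ball p (d p))"
    using d by force
  then obtain r where r: "0 < r" and leb: "\<And>x. x \<in> P \<Longrightarrow> \<exists>B \<in> (\<lambda>p. ball p (d p)) ` P. ball x r \<subseteq> B"
    using Heine_Borel_lemma[OF P(1)] by (metis (no_types, lifting) imageE open_ball)
  show ?thesis
  proof (rule that[OF r])
    fix p y assume p: "p \<in> P" and y: "y \<in> S" and yp: "dist y p < r"
    obtain q where q: "q \<in> P" and sub: "ball p r \<subseteq> ball q (d q)"
      using leb[OF p] by blast
    have "dist (f y) (f q) < e / 2"
      using close[OF q y] sub yp by (auto simp: dist_commute)
    moreover have "p \<in> ball q (d q)"
      using sub r centre_in_ball by blast
    then have "dist (f p) (f q) < e / 2"
      using close[OF q, of p] p P(2) by (auto simp: dist_commute)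
    ultimately show "dist (f y) (f p) < e"
      using dist_triangle_half_l by blast
  qed
qed

theorem uniform_linearization_compact:
  fixes G :: "'a::real_normed_vector \<Rightarrow> 'b::real_normed_vector"
  assumes S: "convex S"
    and G: "\<And>x. x \<in> S \<Longrightarrow> (G has_derivative blinfun_apply (DG x)) (at x within S)"
    and DG: "continuous_on S DG" and P: "compact P" "P \<subseteq> S" and e: "0 < e"
  obtains d where "0 < d"
    "\<And>p w. p \<in> P \<Longrightarrow> p + w \<in> S \<Longrightarrow> norm w < d \<Longrightarrow> norm (G (p + w) - G p - DG p w) \<le> e * norm w"
proof -
  obtain d where d: "0 < d" and close: "\<And>p y. p \<in> P \<Longrightarrow> y \<in> S \<Longrightarrow> dist y p < d \<Longrightarrow> dist (DG y) (DG p) < e"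
    using continuous_on_uniformly_near_compact[OF DG P e] by blast
  show ?thesis
  proof (rule that[OF d])
    fix p w assume p: "p \<in> P" and pw: "p + w \<in> S" and w: "norm w < d"
    let ?I = "closed_segment p (p + w)"
    have I: "?I \<subseteq> S"
      using P(2) p pw by (intro closed_segment_subset S) auto
    have "norm (G (p + w) - G p - DG p (p + w - p)) \<le> norm (p + w - p) * e"
    proof (rule differentiable_bound_linearization[where S="?I" and f'="\<lambda>y. blinfun_apply (DG y)"])
      show "p + u *\<^sub>R (p + w - p) \<in> ?I" if "u \<in> {0..1}" for u
        using that unfolding in_segment by (intro exI[of _ u]) (auto simp: algebra_simps)
      show "(G has_derivative blinfun_apply (DG y)) (at y within ?I)" if "y \<in> ?I" for y
        using G I that by (blast intro: has_derivative_subset)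
      show "onorm (blinfun_apply (DG y) - blinfun_apply (DG p)) \<le> e" if y: "y \<in> ?I" for y
      proof -
        have "dist y p \<le> norm w"
          using y segment_bound(1)[of y p "p + w"] by (simp add: dist_norm)
        then have "norm (DG y - DG p) < e"
          using close[OF p, of y] I y w by (auto simp: dist_norm)
        moreover have "blinfun_apply (DG y) - blinfun_apply (DG p) = blinfun_apply (DG y - DG p)"
          by (simp add: fun_eq_iff blinfun.diff_left)
        ultimately show ?thesis by (simp add: norm_blinfun.rep_eq)
      qed
    qed simp
    then show "norm (G (p + w) - G p - DG p w) \<le> e * norm w"
      by (simp add: mult.commute)
  qed
qed

section \<open>Fixed points of contractions in an exponentially weighted sup norm\<close>

lemma bcontfun_clamp_extension:
  fixes f :: "'u \<Rightarrow> real \<Rightarrow> 'a::metric_space"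
  assumes "\<And>u. u \<in> S \<Longrightarrow> continuous_on {a..b} (f u)"
  shows "\<exists>\<Psi> :: 'u \<Rightarrow> real \<Rightarrow>\<^sub>C 'a. \<forall>u\<in>S. \<forall>x. \<Psi> u x = f u (clamp a b x)"
proof -
  have "\<forall>u\<in>S. \<exists>g::real \<Rightarrow>\<^sub>C 'a. \<forall>x. g x = f u (clamp a b x)"
    using continuous_on_cbox_bcontfunE[of a b] assms by (metis cbox_interval)
  then show ?thesis
    by (rule bchoice)
qed

theorem exp_weighted_contraction_fixpoint:
  fixes H :: "'a::banach set" and \<Phi> :: "(real \<Rightarrow> 'a) \<Rightarrow> real \<Rightarrow> 'a"
  assumes H: "subspace H" "closed H" and T: "0 \<le> T"
    and \<Phi>: "\<And>v. continuous_on {0..T} v \<Longrightarrow> v ` {0..T} \<subseteq> H \<Longrightarrow> continuous_on {0..T} (\<Phi> v) \<and> \<Phi> v ` {0..T} \<subseteq> H"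
    and contraction: "\<And>v1 v2 d t. continuous_on {0..T} v1 \<Longrightarrow> v1 ` {0..T} \<subseteq> H \<Longrightarrow>
       continuous_on {0..T} v2 \<Longrightarrow> v2 ` {0..T} \<subseteq> H \<Longrightarrow>
       (\<And>s. s \<in> {0..T} \<Longrightarrow> norm (v1 s - v2 s) \<le> d * exp (l * s)) \<Longrightarrow> t \<in> {0..T} \<Longrightarrow>
       norm (\<Phi> v1 t - \<Phi> v2 t) \<le> d / 2 * exp (l * t)"
  shows "\<exists>v. continuous_on {0..T} v \<and> v ` {0..T} \<subseteq> H \<and> (\<forall>t\<in>{0..T}. \<Phi> v t = v t)"
proof -
  \<comment> \<open>u \<mapsto> exp (-l t) \<Phi> (exp (l \<cdot>) u) t, extended constantly outside [0,T],
    is a 1/2-contraction of the bounded continuous H-valued functions\<close>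
  define S where "S = PiC UNIV (\<lambda>_::real. H)"
  have in_S: "u \<in> S \<longleftrightarrow> (\<forall>t. apply_bcontfun u t \<in> H)" for u
    unfolding S_def mem_PiC_iff by auto
  define V where "V u s = exp (l * s) *\<^sub>R apply_bcontfun u s" for u :: "real \<Rightarrow>\<^sub>C 'a" and s
  have V: "continuous_on {0..T} (V u)" "u \<in> S \<Longrightarrow> V u ` {0..T} \<subseteq> H" for u
    unfolding V_def in_S using H(1) by (auto intro!: continuous_intros simp: subspace_scale)
  have clamp: "clamp 0 T x \<in> {0..T}" for x :: real
    using clamp_in_interval[of 0 T x] T by simp
  have "continuous_on {0..T} (\<lambda>t. exp (-l * t) *\<^sub>R \<Phi> (V u) t)" if "u \<in> S" for u
    using \<Phi>[OF V] that by (auto intro!: continuous_intros)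
  then have "\<exists>\<Psi> :: _ \<Rightarrow> real \<Rightarrow>\<^sub>C 'a. \<forall>u\<in>S. \<forall>x. \<Psi> u x = exp (-l * clamp 0 T x) *\<^sub>R \<Phi> (V u) (clamp 0 T x)"
    by (rule bcontfun_clamp_extension)
  then obtain \<Psi> where \<Psi>: "\<And>u x. u \<in> S \<Longrightarrow>
      apply_bcontfun (\<Psi> u) x = exp (-l * clamp 0 T x) *\<^sub>R \<Phi> (V u) (clamp 0 T x)"
    by blast
  have "\<Psi> u \<in> S" if u: "u \<in> S" for u
  proof -
    have "\<Phi> (V u) (clamp 0 T x) \<in> H" for x
      using \<Phi>[OF V(1) V(2)[OF u]] clamp[of x] by blast
    then show ?thesis
      unfolding in_S \<Psi>[OF u] using H(1) by (simp add: subspace_scale)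
  qed
  then have "\<Psi> ` S \<subseteq> S" by blast
  moreover have "dist (\<Psi> u1) (\<Psi> u2) \<le> 1/2 * dist u1 u2" if u: "u1 \<in> S" "u2 \<in> S" for u1 u2
  proof (rule dist_bound)
    fix x :: real
    define c where "c = clamp 0 T x"
    have "norm (V u1 s - V u2 s) \<le> dist u1 u2 * exp (l * s)" for s
      using dist_bounded[of u1 s u2] by (simp add: V_def dist_norm mult.commute flip: scaleR_diff_right)
    then have "norm (\<Phi> (V u1) c - \<Phi> (V u2) c) \<le> dist u1 u2 / 2 * exp (l * c)"
      unfolding c_def by (intro contraction V(1) V(2)[OF u(1)] V(2)[OF u(2)] clamp)
    then have "exp (-l * c) * norm (\<Phi> (V u1) c - \<Phi> (V u2) c) \<le> exp (-l * c) * (dist u1 u2 / 2 * exp (l * c))"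
      by (rule mult_left_mono) simp
    also have "\<dots> = 1/2 * dist u1 u2"
      by (simp add: mult_ac flip: exp_add)
    finally show "dist (\<Psi> u1 x) (\<Psi> u2 x) \<le> 1/2 * dist u1 u2"
      by (simp add: \<Psi> u c_def dist_norm flip: scaleR_diff_right)
  qed
  moreover have "complete S"
    unfolding complete_eq_closed S_def by (rule closed_PiC) (use H(2) in auto)
  moreover have "S \<noteq> {}"
    using subspace_0[OF H(1)] in_S[of 0] by auto
  ultimately obtain u where u: "u \<in> S" "\<Psi> u = u"
    using Banach_fix[of S "1/2" \<Psi>] by auto
  have "\<Phi> (V u) t = V u t" if "t \<in> {0..T}" for t
    using \<Psi>[OF u(1), of t] u(2) clamp_cancel_cbox[of t 0 T] that by (simp add: V_def flip: exp_add)
  then show ?thesis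
    using V u(1) by blast
qed

section \<open>Convolution with a weakly singular operator kernel\<close>

locale singular_kernel =
  fixes H0 :: "'a::{real_inner,banach,second_countable_topology} set"
    and K :: "real \<Rightarrow> 'a \<Rightarrow>\<^sub>L 'a" and C \<beta> :: real
  assumes subspace: "subspace H0" and closed: "closed H0"
    and beta: "0 \<le> \<beta>" "\<beta> < 1" and C_nonneg: "0 \<le> C"
    and K_in: "\<And>t x. 0 < t \<Longrightarrow> K t x \<in> H0"
    and norm_K_le: "\<And>t x. 0 < t \<Longrightarrow> norm (K t x) \<le> C * t powr (-\<beta>) * norm x"
    and K_continuous: "\<And>x. continuous_on {0<..} (\<lambda>t. K t x)"
begin

definition kernel_conv :: "real \<Rightarrow> (real \<Rightarrow> 'a) \<Rightarrow> 'a" where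
  "kernel_conv t g = (LINT s:{0..t}|lborel. K (t - s) (g s))"

lemma norm_K_le_bound:
  assumes "0 < t" and "norm x \<le> B"
  shows "norm (K t x) \<le> C * t powr (-\<beta>) * B"
  using norm_K_le[OF assms(1), of x] mult_left_mono[OF assms(2), of "C * t powr (-\<beta>)"] C_nonneg
  by simp

lemma continuous_on_K_comp:
  assumes f: "continuous_on S f" and pos: "\<And>s. s \<in> S \<Longrightarrow> 0 < f s" and u: "continuous_on S u"
  shows "continuous_on S (\<lambda>s. K (f s) (u s))"
  unfolding continuous_on_def
proof
  fix s0 assume s0: "s0 \<in> S"
  have "((\<lambda>s. K (f s) (u s0)) \<longlongrightarrow> K (f s0) (u s0)) (at s0 within S)"
    using continuous_on_compose2[OF K_continuous f] pos s0 unfolding continuous_on_def by auto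
  moreover have "((\<lambda>s. K (f s) (u s - u s0)) \<longlongrightarrow> 0) (at s0 within S)"
  proof (rule Lim_null_comparison)
    show "\<forall>\<^sub>F s in at s0 within S. norm (K (f s) (u s - u s0)) \<le> C * f s powr (-\<beta>) * norm (u s - u s0)"
      using pos norm_K_le by (auto simp: eventually_at_filter intro!: always_eventually)
    have "((\<lambda>s. C * f s powr (-\<beta>) * norm (u s - u s0))
        \<longlongrightarrow> C * f s0 powr (-\<beta>) * norm (u s0 - u s0)) (at s0 within S)"
      using f u s0 pos[OF s0] unfolding continuous_on_def by (intro tendsto_intros) auto
    then show "((\<lambda>s. C * f s powr (-\<beta>) * norm (u s - u s0)) \<longlongrightarrow> 0) (at s0 within S)"
      by simp
  qed
  ultimately show "((\<lambda>s. K (f s) (u s)) \<longlongrightarrow> K (f s0) (u s0)) (at s0 within S)"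
    by (fastforce dest: tendsto_add simp: blinfun.diff_right)
qed

lemma kernel_conv_integrable:
  assumes t: "0 \<le> t" and g: "continuous_on {0..t} g"
  shows "set_integrable lborel {0..t} (\<lambda>s. K (t - s) (g s))"
proof -
  obtain B where B: "0 \<le> B" "\<And>s. s \<in> {0..t} \<Longrightarrow> norm (g s) \<le> B"
    using continuous_on_compact_bound[OF compact_Icc g] by blast
  have int: "set_integrable lborel {0..t} (\<lambda>s. (C * B) * (t - s) powr (-\<beta>))"
    using singular_kernel_integrable[OF beta(2) t] by (rule set_integrable_mult_right)
  have "(\<lambda>s. indicator {0..t} s *\<^sub>R K (t - s) (g s)) \<in> borel_measurable lborel"
    unfolding measurable_lborel2
    by (intro borel_measurable_indicator_Icc_scaleR continuous_on_K_comp continuous_intros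
        continuous_on_subset[OF g]) auto
  then show ?thesis
    unfolding set_integrable_def
  proof (rule Bochner_Integration.integrable_bound[OF int[unfolded set_integrable_def]])
    show "AE s in lborel. norm (indicator {0..t} s *\<^sub>R K (t - s) (g s))
        \<le> norm (indicator {0..t} s *\<^sub>R (C * B * (t - s) powr - \<beta>))"
      using AE_lborel_singleton[of t]
    proof (rule AE_mp, intro AE_I2 impI)
      fix s :: real assume "s \<noteq> t"
      then have "s \<in> {0..t} \<Longrightarrow> norm (K (t - s) (g s)) \<le> C * (t - s) powr (-\<beta>) * B"
        using B(2) by (intro norm_K_le_bound) auto
      then show "norm (indicator {0..t} s *\<^sub>R K (t - s) (g s))
          \<le> norm (indicator {0..t} s *\<^sub>R (C * B * (t - s) powr - \<beta>))"
        using B C_nonneg by (auto simp: indicator_def mult_ac)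
    qed
  qed
qed

lemma kernel_conv_in:
  assumes t: "0 \<le> t" and g: "continuous_on {0..t} g"
  shows "kernel_conv t g \<in> H0"
proof -
  \<comment> \<open>the orthogonal projection onto H0 commutes with the Bochner integral\<close>
  let ?P = "orth_proj H0"
  let ?F = "\<lambda>s. indicator {0..t} s *\<^sub>R K (t - s) (g s)"
  have P: "bounded_linear ?P"
    by (rule bounded_linear_orth_proj[OF subspace closed])
  have "?P (integral\<^sup>L lborel ?F) = integral\<^sup>L lborel (\<lambda>s. ?P (?F s))"
    using kernel_conv_integrable[OF t g] by (simp add: set_integrable_def integral_bounded_linear[OF P])
  also have "\<dots> = integral\<^sup>L lborel ?F"
  proof (rule integral_discrete_difference[where X="{t}"])
    fix s assume "s \<notin> {t}"
    then show "?P (?F s) = ?F s"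
      using orth_proj_id[OF subspace closed K_in] linear_0[OF bounded_linear.linear[OF P]]
      by (cases "s \<in> {0..t}") auto
  qed auto
  finally show ?thesis
    using orth_proj_in[OF subspace closed] unfolding kernel_conv_def set_lebesgue_integral_def
    by metis
qed

lemma kernel_conv_diff:
  assumes "0 \<le> t" "continuous_on {0..t} g1" "continuous_on {0..t} g2"
  shows "kernel_conv t (\<lambda>s. g1 s - g2 s) = kernel_conv t g1 - kernel_conv t g2"
  unfolding kernel_conv_def blinfun.diff_right
  using assms by (intro set_integral_diff kernel_conv_integrable)

lemma kernel_conv_add:
  assumes "0 \<le> t" "continuous_on {0..t} g1" "continuous_on {0..t} g2"
  shows "kernel_conv t (\<lambda>s. g1 s + g2 s) = kernel_conv t g1 + kernel_conv t g2"
  unfolding kernel_conv_def blinfun.add_right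
  using assms by (intro set_integral_add kernel_conv_integrable)

lemma kernel_conv_scaleR: "kernel_conv t (\<lambda>s. c *\<^sub>R g s) = c *\<^sub>R kernel_conv t g"
  unfolding kernel_conv_def blinfun.scaleR_right by simp

lemma kernel_conv_cong: "(\<And>s. s \<in> {0..t} \<Longrightarrow> g1 s = g2 s) \<Longrightarrow> kernel_conv t g1 = kernel_conv t g2"
  unfolding kernel_conv_def by (rule set_lebesgue_integral_cong) auto

lemma norm_kernel_conv_le:
  assumes t: "0 \<le> t" and g: "continuous_on {0..t} g" and w: "continuous_on {0..t} w"
    and bound: "\<And>s. s \<in> {0..t} \<Longrightarrow> norm (g s) \<le> b + L * w s"
  shows "norm (kernel_conv t g) \<le> C * b * (t powr (1 - \<beta>) / (1 - \<beta>))
           + C * L * (LINT s:{0..t}|lborel. (t - s) powr (-\<beta>) * w s)"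
proof -
  have int_w: "set_integrable lborel {0..t} (\<lambda>s. (t - s) powr (-\<beta>) * w s)"
    by (rule set_integrable_singular_kernel_mult[OF beta(2) t w])
  have int_b: "set_integrable lborel {0..t} (\<lambda>s. (t - s) powr (-\<beta>))"
    by (rule singular_kernel_integrable[OF beta(2) t])
  have "norm (kernel_conv t g) \<le> (LINT s:{0..t}|lborel. norm (K (t - s) (g s)))"
    unfolding kernel_conv_def by (rule set_integral_norm_bound[OF kernel_conv_integrable[OF t g]])
  also have "\<dots> \<le> (LINT s:{0..t}|lborel. C * b * (t - s) powr (-\<beta>) + C * L * ((t - s) powr (-\<beta>) * w s))"
  proof (rule set_integral_mono_AE)
    show "set_integrable lborel {0..t} (\<lambda>s. norm (K (t - s) (g s)))"
      by (rule set_integrable_norm[OF kernel_conv_integrable[OF t g]])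
    show "set_integrable lborel {0..t} (\<lambda>s. C * b * (t - s) powr (-\<beta>) + C * L * ((t - s) powr (-\<beta>) * w s))"
      using int_b int_w by (intro set_integral_add set_integrable_mult_right)
    show "AE s\<in>{0..t} in lborel. norm (K (t - s) (g s))
        \<le> C * b * (t - s) powr (-\<beta>) + C * L * ((t - s) powr (-\<beta>) * w s)"
      using AE_lborel_singleton[of t]
    proof (rule AE_mp, intro AE_I2 impI)
      fix s :: real assume s: "s \<noteq> t" "s \<in> {0..t}"
      then have "norm (K (t - s) (g s)) \<le> C * (t - s) powr (-\<beta>) * (b + L * w s)"
        using bound by (intro norm_K_le_bound) auto
      then show "norm (K (t - s) (g s)) \<le> C * b * (t - s) powr (-\<beta>) + C * L * ((t - s) powr (-\<beta>) * w s)"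
        by (simp add: algebra_simps)
    qed
  qed
  also have "\<dots> = C * b * (t powr (1 - \<beta>) / (1 - \<beta>)) + C * L * (LINT s:{0..t}|lborel. (t - s) powr (-\<beta>) * w s)"
    using int_b int_w singular_kernel_integral[OF beta(2) t]
    by (simp add: set_integral_add set_integrable_mult_right)
  finally show ?thesis .
qed

lemma kernel_conv_reflect:
  assumes "\<And>s. s \<in> {0..t} \<Longrightarrow> g s = h s"
  shows "kernel_conv t g = integral\<^sup>L lborel (\<lambda>r. indicator {0..t} r *\<^sub>R K r (h (t - r)))"
proof -
  have "kernel_conv t g = integral\<^sup>L lborel (\<lambda>s. indicator {0..t} s *\<^sub>R K (t - s) (g s))"
    by (simp add: kernel_conv_def set_lebesgue_integral_def)
  also have "\<dots> = \<bar>-1\<bar> *\<^sub>R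
      integral\<^sup>L lborel (\<lambda>r. indicator {0..t} (t + -1 * r) *\<^sub>R K (t - (t + -1 * r)) (g (t + -1 * r)))"
    by (rule lborel_integral_real_affine) simp
  also have "\<dots> = integral\<^sup>L lborel (\<lambda>r. indicator {0..t} r *\<^sub>R K r (h (t - r)))"
  proof -
    have "indicator {0..t} (t + -1 * r) *\<^sub>R K (t - (t + -1 * r)) (g (t + -1 * r))
        = indicator {0..t} r *\<^sub>R K r (h (t - r))" for r
      using assms[of "t - r"] by (auto simp: indicator_def)
    then show ?thesis by simp
  qed
  finally show ?thesis .
qed

lemma continuous_on_reflected_kernel_integral:
  assumes h: "continuous_on UNIV h" and B: "\<And>s. norm (h s) \<le> B"
  shows "continuous_on {0..T} (\<lambda>t. integral\<^sup>L lborel (\<lambda>r. indicator {0..t} r *\<^sub>R K r (h (t - r))))"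
  unfolding continuous_on_sequentially comp_def
proof (intro allI ballI impI, elim conjE)
  fix x :: "nat \<Rightarrow> real" and a assume x: "\<forall>n. x n \<in> {0..T}" and xa: "x \<longlonglongrightarrow> a" and a: "a \<in> {0..T}"
  show "(\<lambda>i. integral\<^sup>L lborel (\<lambda>r. indicator {0..x i} r *\<^sub>R K r (h (x i - r))))
         \<longlonglongrightarrow> integral\<^sup>L lborel (\<lambda>r. indicator {0..a} r *\<^sub>R K r (h (a - r)))"
  proof (rule integral_dominated_convergence[where w="\<lambda>r. C * B * (indicator {0..T} r * r powr (-\<beta>))"])
    have "continuous_on {0<..<t} (\<lambda>r. K r (h (t - r)))" for t
      by (intro continuous_on_K_comp continuous_intros continuous_on_compose2[OF h]) auto
    then have meas: "(\<lambda>r. indicator {0..t} r *\<^sub>R K r (h (t - r))) \<in> borel_measurable lborel" for t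
      unfolding measurable_lborel2 by (rule borel_measurable_indicator_Icc_scaleR)
    then show "(\<lambda>r. indicator {0..a} r *\<^sub>R K r (h (a - r))) \<in> borel_measurable lborel"
      "(\<lambda>r. indicator {0..x i} r *\<^sub>R K r (h (x i - r))) \<in> borel_measurable lborel" for i
      by this+
    show "integrable lborel (\<lambda>r. C * B * (indicator {0..T} r * r powr (-\<beta>)))"
      using a by (intro integrable_mult_right integrable_indicator_powr_neg beta) auto
    show "AE r in lborel. (\<lambda>i. indicator {0..x i} r *\<^sub>R K r (h (x i - r)))
        \<longlonglongrightarrow> indicator {0..a} r *\<^sub>R K r (h (a - r))"
      using AE_lborel_singleton[of a]
      by (rule AE_mp, intro AE_I2 impI tendsto_indicator_atLeastAtMost_scaleR xa blinfun.tendsto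
          tendsto_const continuous_on_tendsto_compose[OF h] tendsto_intros) auto
    show "AE r in lborel. norm (indicator {0..x i} r *\<^sub>R K r (h (x i - r)))
        \<le> C * B * (indicator {0..T} r * r powr (-\<beta>))" for i
      using AE_lborel_singleton[of 0]
    proof (rule AE_mp, intro AE_I2 impI)
      fix r :: real assume "r \<noteq> 0"
      then have "r \<in> {0..x i} \<Longrightarrow> norm (K r (h (x i - r))) \<le> C * r powr (-\<beta>) * B"
        using B by (intro norm_K_le_bound) auto
      moreover have "0 \<le> B" using B[of 0] norm_ge_zero order_trans by blast
      ultimately show "norm (indicator {0..x i} r *\<^sub>R K r (h (x i - r)))
          \<le> C * B * (indicator {0..T} r * r powr (-\<beta>))"
        using x[rule_format, of i] C_nonneg by (auto simp: indicator_def mult_ac)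
    qed
  qed
qed

lemma continuous_on_kernel_conv:
  assumes T: "0 \<le> T" and g: "continuous_on {0..T} g"
  shows "continuous_on {0..T} (\<lambda>t. kernel_conv t g)"
proof -
  \<comment> \<open>after reflection the singularity of the kernel sits at the fixed point 0, so dominated
    convergence applies to a continuous bounded extension h of g\<close>
  define h where "h s = g (max 0 (min T s))" for s
  have h: "continuous_on UNIV h"
    unfolding h_def by (rule continuous_on_compose2[OF g]) (auto intro!: continuous_intros simp: T)
  obtain B where "\<And>s. s \<in> {0..T} \<Longrightarrow> norm (g s) \<le> B"
    using continuous_on_compact_bound[OF compact_Icc g] by blast
  then have "norm (h s) \<le> B" for s
    unfolding h_def using T by auto
  then have "continuous_on {0..T} (\<lambda>t. integral\<^sup>L lborel (\<lambda>r. indicator {0..t} r *\<^sub>R K r (h (t - r))))"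
    by (rule continuous_on_reflected_kernel_integral[OF h])
  then show ?thesis
    by (rule continuous_on_eq) (auto simp: h_def intro!: kernel_conv_reflect[symmetric])
qed

definition gronwall_const :: "real \<Rightarrow> real \<Rightarrow> real" where
  "gronwall_const T L = 2 * exp (exp_weight_rate \<beta> (C * L) T * T)"

lemma gronwall_const_nonneg: "0 \<le> gronwall_const T L"
  by (simp add: gronwall_const_def)

lemma kernel_conv_gronwall:
  assumes L: "0 \<le> L" and u: "continuous_on {0..T} u" and g: "continuous_on {0..T} g"
    and a: "0 \<le> a" and b: "0 \<le> b"
    and g_le: "\<And>s. s \<in> {0..T} \<Longrightarrow> norm (g s) \<le> b + L * norm (u s)"
    and u_le: "\<And>t. t \<in> {0..T} \<Longrightarrow> norm (u t) \<le> a + norm (kernel_conv t g)"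
    and t: "t \<in> {0..T}"
  shows "norm (u t) \<le> gronwall_const T L * (a + C * b * (T powr (1 - \<beta>) / (1 - \<beta>)))"
  unfolding gronwall_const_def
proof (rule singular_gronwall[OF beta _ _ _ _ t])
  show "0 \<le> C * L" "0 \<le> a + C * b * (T powr (1 - \<beta>) / (1 - \<beta>))"
    using a b L C_nonneg beta by simp_all
  show "continuous_on {0..T} (\<lambda>t. norm (u t))" by (intro continuous_intros u)
  fix t assume t: "t \<in> {0..T}"
  have sub: "{0..t} \<subseteq> {0..T}" using t by auto
  have "norm (kernel_conv t g) \<le> C * b * (t powr (1 - \<beta>) / (1 - \<beta>))
      + C * L * (LINT s:{0..t}|lborel. (t - s) powr (-\<beta>) * norm (u s))"
    using t sub g_le
    by (intro norm_kernel_conv_le continuous_intros continuous_on_subset[OF u]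
        continuous_on_subset[OF g]) auto
  also have "C * b * (t powr (1 - \<beta>) / (1 - \<beta>)) \<le> C * b * (T powr (1 - \<beta>) / (1 - \<beta>))"
    using t b C_nonneg beta by (intro mult_left_mono divide_right_mono powr_mono2) auto
  finally show "norm (u t) \<le> a + C * b * (T powr (1 - \<beta>) / (1 - \<beta>))
      + C * L * (LINT s:{0..t}|lborel. (t - s) powr (-\<beta>) * norm (u s))"
    using u_le[OF t] by simp
qed

section \<open>Volterra equations driven by the kernel\<close>

definition volterra_admissible :: "real \<Rightarrow> (real \<Rightarrow> 'a \<Rightarrow> 'a) \<Rightarrow> bool" where
  "volterra_admissible T F \<longleftrightarrow> (\<exists>L. \<forall>s\<in>{0..T}. L-lipschitz_on H0 (F s)) \<and>
     (\<forall>v. continuous_on {0..T} v \<longrightarrow> v ` {0..T} \<subseteq> H0 \<longrightarrow> continuous_on {0..T} (\<lambda>s. F s (v s)))"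

definition volterra_sol :: "real set \<Rightarrow> (real \<Rightarrow> 'a) \<Rightarrow> (real \<Rightarrow> 'a \<Rightarrow> 'a) \<Rightarrow> (real \<Rightarrow> 'a) \<Rightarrow> bool" where
  "volterra_sol I f F v \<longleftrightarrow> continuous_on I v \<and> v ` I \<subseteq> H0 \<and> (\<forall>t\<in>I. v t = f t + kernel_conv t (\<lambda>s. F s (v s)))"

lemma volterra_admissible_lipschitz:
  assumes "volterra_admissible T F"
  shows "\<exists>L\<ge>0. \<forall>s\<in>{0..T}. \<forall>x\<in>H0. \<forall>y\<in>H0. norm (F s x - F s y) \<le> L * norm (x - y)"
proof -
  obtain L where L: "\<And>s. s \<in> {0..T} \<Longrightarrow> L-lipschitz_on H0 (F s)"
    using assms unfolding volterra_admissible_def by blast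
  have "norm (F s x - F s y) \<le> max L 0 * norm (x - y)" if "s \<in> {0..T}" "x \<in> H0" "y \<in> H0" for s x y
    using lipschitz_onD[OF L[OF that(1)] that(2,3)]
    by (simp add: dist_norm) (metis max.cobounded1 mult_right_mono norm_ge_zero order_trans)
  then show ?thesis
    by (intro exI[of _ "max L 0"]) auto
qed

lemma volterra_admissible_continuous:
  "volterra_admissible T F \<Longrightarrow> continuous_on {0..T} v \<Longrightarrow> v ` {0..T} \<subseteq> H0 \<Longrightarrow>
    continuous_on {0..T} (\<lambda>s. F s (v s))"
  unfolding volterra_admissible_def by blast

lemma
  assumes "volterra_sol I f F v"
  shows volterra_sol_continuous: "continuous_on I v"
    and volterra_sol_in: "t \<in> I \<Longrightarrow> v t \<in> H0"
    and volterra_sol_eq: "t \<in> I \<Longrightarrow> v t = f t + kernel_conv t (\<lambda>s. F s (v s))"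
  using assms by (auto simp: volterra_sol_def)

lemma volterra_sol_subset: "volterra_sol I f F v \<Longrightarrow> J \<subseteq> I \<Longrightarrow> volterra_sol J f F v"
  unfolding volterra_sol_def by (auto intro: continuous_on_subset)

lemma volterra_sol_unique_Icc:
  assumes F: "volterra_admissible T F" and v1: "volterra_sol {0..T} f F v1"
    and v2: "volterra_sol {0..T} f F v2"
    and t: "t \<in> {0..T}"
  shows "v1 t = v2 t"
proof -
  obtain L where L: "0 \<le> L" and lip: "\<forall>s\<in>{0..T}. \<forall>x\<in>H0. \<forall>y\<in>H0. norm (F s x - F s y) \<le> L * norm (x - y)"
    using volterra_admissible_lipschitz[OF F] by blast
  have v: "continuous_on {0..T} v1" "continuous_on {0..T} v2"
    using v1 v2 by (simp_all add: volterra_sol_def)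
  have Fv: "continuous_on {0..T} (\<lambda>s. F s (v1 s))" "continuous_on {0..T} (\<lambda>s. F s (v2 s))"
    using v1 v2 by (auto intro!: volterra_admissible_continuous[OF F] simp: volterra_sol_def)
  have "norm (v1 t - v2 t) \<le> gronwall_const T L * (0 + C * 0 * (T powr (1 - \<beta>) / (1 - \<beta>)))"
  proof (rule kernel_conv_gronwall[OF L _ _ order.refl order.refl _ _ t])
    show "continuous_on {0..T} (\<lambda>s. v1 s - v2 s)" "continuous_on {0..T} (\<lambda>s. F s (v1 s) - F s (v2 s))"
      using v Fv by (simp_all add: continuous_on_diff)
    show "norm (F s (v1 s) - F s (v2 s)) \<le> 0 + L * norm (v1 s - v2 s)" if "s \<in> {0..T}" for s
      using lip volterra_sol_in[OF v1 that] volterra_sol_in[OF v2 that] that by simp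
    show "norm (v1 s - v2 s)
        \<le> 0 + norm (kernel_conv s (\<lambda>s. F s (v1 s) - F s (v2 s)))" if s: "s \<in> {0..T}" for s
      using volterra_sol_eq[OF v1 s] volterra_sol_eq[OF v2 s] s
        kernel_conv_diff[of s, OF _ continuous_on_subset[OF Fv(1)] continuous_on_subset[OF Fv(2)]]
      by simp
  qed
  then show ?thesis by simp
qed

lemma norm_kernel_conv_diff_exp_weighted:
  assumes L: "0 \<le> L" and t: "t \<in> {0..T}"
    and lip: "\<forall>s\<in>{0..T}. \<forall>x\<in>H0. \<forall>y\<in>H0. norm (F s x - F s y) \<le> L * norm (x - y)"
    and Fv: "continuous_on {0..T} (\<lambda>s. F s (v1 s))" "continuous_on {0..T} (\<lambda>s. F s (v2 s))"
    and v: "\<And>s. s \<in> {0..T} \<Longrightarrow> v1 s \<in> H0 \<and> v2 s \<in> H0"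
    and close: "\<And>s. s \<in> {0..T} \<Longrightarrow> norm (v1 s - v2 s) \<le> d * exp (l * s)"
    and half: "C * L * (LINT s:{0..t}|lborel. (t - s) powr (-\<beta>) * exp (-l * (t - s))) \<le> 1/2"
  shows "norm (kernel_conv t (\<lambda>s. F s (v1 s)) - kernel_conv t (\<lambda>s. F s (v2 s))) \<le> d / 2 * exp (l * t)"
proof -
  have sub: "{0..t} \<subseteq> {0..T}" using t by auto
  have d: "0 \<le> d" using close[OF t] by (metis exp_gt_zero norm_ge_zero order_trans zero_le_mult_iff not_le)
  have "norm (kernel_conv t (\<lambda>s. F s (v1 s)) - kernel_conv t (\<lambda>s. F s (v2 s)))
      = norm (kernel_conv t (\<lambda>s. F s (v1 s) - F s (v2 s)))"
    using t continuous_on_subset[OF Fv(1) sub] continuous_on_subset[OF Fv(2) sub]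
    by (simp add: kernel_conv_diff)
  also have "\<dots>
      \<le> C * 0 * (t powr (1 - \<beta>) / (1 - \<beta>)) + C * L * (LINT s:{0..t}|lborel. (t - s) powr (-\<beta>) * (exp (l * s) * d))"
  proof (rule norm_kernel_conv_le)
    show "continuous_on {0..t} (\<lambda>s. F s (v1 s) - F s (v2 s))"
      using continuous_on_subset[OF Fv(1) sub] continuous_on_subset[OF Fv(2) sub] by (rule continuous_on_diff)
    fix s assume "s \<in> {0..t}"
    then have s: "s \<in> {0..T}" using sub by auto
    have "norm (F s (v1 s) - F s (v2 s)) \<le> L * norm (v1 s - v2 s)" using lip v[OF s] s by blast
    also have "\<dots>
        \<le> L * (exp (l * s) * d)" using close[OF s] L by (intro mult_left_mono) (auto simp: mult.commute)
    finally show "norm (F s (v1 s) - F s (v2 s)) \<le> 0 + L * (exp (l * s) * d)" by simp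
  qed (use t in \<open>auto intro!: continuous_intros\<close>)
  also have "\<dots> = d * exp (l * t) * (C * L * (LINT s:{0..t}|lborel. (t - s) powr (-\<beta>) * exp (-l * (t - s))))"
    by (subst singular_kernel_exp_weight) (simp add: mult_ac)
  also have "\<dots> \<le> d * exp (l * t) * (1/2)"
    using half d by (intro mult_left_mono) auto
  finally show ?thesis by simp
qed

lemma volterra_sol_exists_Icc:
  assumes T: "0 \<le> T" and F: "volterra_admissible T F" and f: "continuous_on {0..T} f" "f ` {0..T} \<subseteq> H0"
  shows "\<exists>v. volterra_sol {0..T} f F v"
proof -
  obtain L where L: "0 \<le> L" and lip: "\<forall>s\<in>{0..T}. \<forall>x\<in>H0. \<forall>y\<in>H0. norm (F s x - F s y) \<le> L * norm (x - y)"
    using volterra_admissible_lipschitz[OF F] by blast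
  let ?l = "exp_weight_rate \<beta> (C * L) T"
  have "\<exists>v. continuous_on {0..T} v \<and> v ` {0..T} \<subseteq> H0 \<and> (\<forall>t\<in>{0..T}. f t + kernel_conv t (\<lambda>s. F s (v s)) = v t)"
  proof (rule exp_weighted_contraction_fixpoint[OF subspace closed T, where l = ?l])
    fix v assume v: "continuous_on {0..T} v" "v ` {0..T} \<subseteq> H0"
    have Fv: "continuous_on {0..T} (\<lambda>s. F s (v s))"
      by (rule volterra_admissible_continuous[OF F v])
    have "kernel_conv t (\<lambda>s. F s (v s)) \<in> H0" if "t \<in> {0..T}" for t
      using that by (intro kernel_conv_in continuous_on_subset[OF Fv]) auto
    then show "continuous_on {0..T} (\<lambda>t. f t + kernel_conv t (\<lambda>s. F s (v s))) \<and>
        (\<lambda>t. f t + kernel_conv t (\<lambda>s. F s (v s))) ` {0..T} \<subseteq> H0"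
      using f subspace
      by (auto intro!: continuous_intros continuous_on_kernel_conv[OF T Fv] simp: subspace_add)
  next
    fix v1 v2 d t
    assume v1: "continuous_on {0..T} v1" "v1 ` {0..T} \<subseteq> H0"
      and v2: "continuous_on {0..T} v2" "v2 ` {0..T} \<subseteq> H0"
      and close: "\<And>s. s \<in> {0..T} \<Longrightarrow> norm (v1 s - v2 s) \<le> d * exp (?l * s)" and t: "t \<in> {0..T}"
    have "norm (kernel_conv t (\<lambda>s. F s (v1 s)) - kernel_conv t (\<lambda>s. F s (v2 s))) \<le> d / 2 * exp (?l * t)"
    proof (rule norm_kernel_conv_diff_exp_weighted[OF L t lip _ _ _ close])
      show "continuous_on {0..T} (\<lambda>s. F s (v1 s))" "continuous_on {0..T} (\<lambda>s. F s (v2 s))"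
        using volterra_admissible_continuous[OF F] v1 v2 by blast+
      show "v1 s \<in> H0 \<and> v2 s \<in> H0" if "s \<in> {0..T}" for s
        using v1 v2 that by blast
      show "C * L * (LINT s:{0..t}|lborel. (t - s) powr (-\<beta>) * exp (-?l * (t - s))) \<le> 1/2"
        using beta C_nonneg L t by (intro singular_kernel_exp_integral_half) auto
    qed
    then show "norm (f t + kernel_conv t (\<lambda>s. F s (v1 s)) - (f t + kernel_conv t (\<lambda>s. F s (v2 s))))
        \<le> d / 2 * exp (?l * t)"
      by simp
  qed
  then show ?thesis
    unfolding volterra_sol_def by (metis (no_types, lifting))
qed

lemma volterra_sol_unique:
  assumes F: "\<And>T. volterra_admissible T F"
    and v1: "volterra_sol {0..} f F v1" and v2: "volterra_sol {0..} f F v2" and t: "0 \<le> t"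
  shows "v1 t = v2 t"
  using volterra_sol_unique_Icc[OF F volterra_sol_subset[OF v1] volterra_sol_subset[OF v2], of t] t
  by auto

lemma volterra_sol_atLeast_iff:
  "volterra_sol {0..} f F V \<longleftrightarrow> (\<forall>n::nat. volterra_sol {0..real n} f F V)"
proof (intro iffI allI)
  assume V_sol: "\<forall>n::nat. volterra_sol {0..real n} f F V"
  show "volterra_sol {0..} f F V"
    unfolding volterra_sol_def
  proof (intro conjI ballI image_subsetI)
    show "continuous_on {0..} V"
    proof (clarsimp simp: continuous_on_eq_continuous_within)
      fix t :: real assume t: "0 \<le> t"
      obtain n :: nat where n: "t < real n" using reals_Archimedean2 by blast
      have "continuous (at t within {0..real n}) V"
        using volterra_sol_continuous[OF V_sol[rule_format, of n]] t n
        by (simp add: continuous_on_eq_continuous_within)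
      moreover have "at t within {0..} = at t within {0..real n}"
        using n by (intro at_within_nhd[of _ "{..<real n}"]) auto
      ultimately show "continuous (at t within {0..}) V" by simp
    qed
    fix t :: real assume "t \<in> {0..}"
    then have t: "t \<in> {0..real (nat \<lceil>t\<rceil>)}" by auto
    show "V t \<in> H0" by (rule volterra_sol_in[OF V_sol[rule_format] t])
    show "V t = f t + kernel_conv t (\<lambda>s. F s (V s))" by (rule volterra_sol_eq[OF V_sol[rule_format] t])
  qed
qed (auto elim: volterra_sol_subset)

lemma volterra_sol_exists:
  assumes F: "\<And>T. volterra_admissible T F" and f: "continuous_on {0..} f" "f ` {0..} \<subseteq> H0"
  shows "\<exists>v. volterra_sol {0..} f F v"
proof -
  have "\<exists>v. volterra_sol {0..real n} f F v" for n
    using f by (intro volterra_sol_exists_Icc F) (auto intro: continuous_on_subset)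
  then obtain v where v: "\<And>n. volterra_sol {0..real n} f F (v n)"
    by metis
  define V where "V t = v (nat \<lceil>t\<rceil>) t" for t
  have V_eq: "V t = v n t" if "t \<in> {0..real n}" for n t
  proof -
    have n: "\<lceil>t\<rceil> \<le> int n" "t \<in> {0..real (nat \<lceil>t\<rceil>)}"
      using that by (auto simp: ceiling_le_iff)
    show ?thesis
      unfolding V_def
      by (rule volterra_sol_unique_Icc[where T="real (nat \<lceil>t\<rceil>)", OF F
          volterra_sol_subset[OF v] volterra_sol_subset[OF v[of n]]]) (use n in auto)
  qed
  have "volterra_sol {0..real n} f F V" for n
    unfolding volterra_sol_def
  proof (intro conjI ballI image_subsetI)
    show "continuous_on {0..real n} V"
      using volterra_sol_continuous[OF v[of n]] by (rule continuous_on_eq) (use V_eq in auto)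
    fix t assume t: "t \<in> {0..real n}"
    show "V t \<in> H0" using volterra_sol_in[OF v t] V_eq[OF t] by simp
    have "kernel_conv t (\<lambda>s. F s (V s)) = kernel_conv t (\<lambda>s. F s (v n s))"
      using t V_eq[of _ n] by (intro kernel_conv_cong) auto
    then show "V t = f t + kernel_conv t (\<lambda>s. F s (V s))"
      using volterra_sol_eq[OF v t] V_eq[OF t] by simp
  qed
  then show ?thesis
    unfolding volterra_sol_atLeast_iff by blast
qed

end

lemma singular_kernel_factorization:
  fixes H0 :: "'a::{real_inner,banach,second_countable_topology} set" and R :: "'a \<Rightarrow>\<^sub>L 'a"
    and P K :: "real \<Rightarrow> 'a \<Rightarrow>\<^sub>L 'a"
  assumes H0: "subspace H0" "closed H0" and \<beta>: "0 \<le> \<beta>" "\<beta> < 1" and \<omega>: "\<omega> \<le> 0"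
    and R_in: "\<And>x. R x \<in> H0"
    and P_in: "\<And>t x. 0 < t \<Longrightarrow> x \<in> H0 \<Longrightarrow> P t x \<in> H0"
    and P_bound: "\<And>t x. 0 < t \<Longrightarrow> x \<in> H0 \<Longrightarrow> norm (P t x) \<le> M * t powr (-\<beta>) * exp (\<omega> * t) * norm x"
    and P_continuous: "\<And>x. x \<in> H0 \<Longrightarrow> continuous_on {0<..} (\<lambda>t. P t x)"
    and K_eq: "\<And>t x. 0 < t \<Longrightarrow> K t x = P t (R x)"
  shows "singular_kernel H0 K (\<bar>M\<bar> * norm R) \<beta>"
proof
  fix t :: real and x :: 'a assume t: "0 < t"
  have "norm (K t x) \<le> M * t powr (-\<beta>) * exp (\<omega> * t) * norm (R x)"
    using K_eq[OF t] P_bound[OF t R_in] by simp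
  also have "\<dots> \<le> \<bar>M\<bar> * t powr (-\<beta>) * 1 * (norm R * norm x)"
    using t \<omega> by (intro mult_mono norm_blinfun) (auto simp: mult_nonpos_nonneg)
  finally show "norm (K t x) \<le> \<bar>M\<bar> * norm R * t powr (-\<beta>) * norm x"
    by (simp add: mult_ac)
  show "K t x \<in> H0" using K_eq[OF t] P_in[OF t R_in] by simp
next
  fix x :: 'a
  show "continuous_on {0<..} (\<lambda>t. K t x)"
    using P_continuous[OF R_in] by (rule continuous_on_eq) (simp add: K_eq)
qed (use H0 \<beta> in auto)

section \<open>The mild solution and its linearization\<close>

text \<open>The setting of the paper for one sample path: K is the kernel S_A', Y the corresponding
  path of the Ornstein-Uhlenbeck process and traj \<xi> s the cocycle at time s.\<close>

locale mild_setting = singular_kernel H0 K C \<beta>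
  for H0 :: "'a::{real_inner,banach,second_countable_topology} set" and K C \<beta> +
  fixes T0 :: "real \<Rightarrow> 'a \<Rightarrow>\<^sub>L 'a" and G :: "'a \<Rightarrow> 'a" and DG :: "'a \<Rightarrow> 'a \<Rightarrow>\<^sub>L 'a"
    and L :: real and Y :: "real \<Rightarrow> 'a"
  assumes T0_in: "\<And>t x. 0 \<le> t \<Longrightarrow> x \<in> H0 \<Longrightarrow> T0 t x \<in> H0"
    and T0_continuous: "\<And>x. x \<in> H0 \<Longrightarrow> continuous_on {0..} (\<lambda>t. T0 t x)"
    and G_lipschitz: "L-lipschitz_on H0 G"
    and G_deriv: "\<And>x. x \<in> H0 \<Longrightarrow> (G has_derivative DG x) (at x within H0)"
    and DG_continuous: "continuous_on H0 DG"
    and Y_continuous: "continuous_on UNIV Y" and Y_in: "\<And>t. Y t \<in> H0"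
begin

abbreviation traj :: "'a \<Rightarrow> real \<Rightarrow> 'a" where
  "traj \<xi> s \<equiv> cocycle T0 K G H0 Y s \<xi>"

lemma norm_G_diff_le: "x \<in> H0 \<Longrightarrow> y \<in> H0 \<Longrightarrow> norm (G x - G y) \<le> L * norm (x - y)"
  using lipschitz_onD[OF G_lipschitz] by (simp add: dist_norm)

lemma volterra_admissible_shifted_G: "volterra_admissible T (\<lambda>s x. G (x + Y s))"
  unfolding volterra_admissible_def
proof (intro conjI exI allI impI ballI)
  show "L-lipschitz_on H0 (\<lambda>x. G (x + Y s))" for s
    using G_lipschitz Y_in subspace
    by (auto simp: lipschitz_on_def dist_norm subspace_add intro: norm_G_diff_le[THEN order_trans])
  fix v assume "continuous_on {0..T} v" "v ` {0..T} \<subseteq> H0"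
  then show "continuous_on {0..T} (\<lambda>s. G (v s + Y s))"
    using Y_in subspace
    by (intro continuous_on_compose2[OF lipschitz_on_continuous_on[OF G_lipschitz]] continuous_intros
        continuous_on_subset[OF Y_continuous]) (auto simp: subspace_add)
qed

lemma mild_sol_iff_volterra_sol:
  "mild_sol T0 K G H0 Y \<xi> V \<longleftrightarrow> volterra_sol {0..} (\<lambda>t. T0 t (\<xi> - Y 0)) (\<lambda>s x. G (x + Y s)) V"
  unfolding mild_sol_def volterra_sol_def kernel_conv_def by (simp add: Ball_def)

lemma mild_sol_exists: "\<xi> \<in> H0 \<Longrightarrow> \<exists>V. mild_sol T0 K G H0 Y \<xi> V"
  unfolding mild_sol_iff_volterra_sol
  using Y_in subspace
  by (intro volterra_sol_exists volterra_admissible_shifted_G T0_continuous) (auto intro!: T0_in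
      simp: subspace_diff)

lemma mild_sol_unique:
  "mild_sol T0 K G H0 Y \<xi> V1 \<Longrightarrow> mild_sol T0 K G H0 Y \<xi> V2 \<Longrightarrow> 0 \<le> t \<Longrightarrow> V1 t = V2 t"
  unfolding mild_sol_iff_volterra_sol by (rule volterra_sol_unique[OF volterra_admissible_shifted_G])

lemma cocycle_eq:
  assumes "mild_sol T0 K G H0 Y \<xi> V" "0 \<le> t"
  shows "cocycle T0 K G H0 Y t \<xi> = V t + Y t"
proof -
  have "(THE x. \<exists>V. mild_sol T0 K G H0 Y \<xi> V \<and> x = V t) = V t"
    using assms mild_sol_unique by blast
  then show ?thesis unfolding cocycle_def by simp
qed

definition mild_solution :: "'a \<Rightarrow> real \<Rightarrow> 'a" where
  "mild_solution \<xi> = (SOME V. mild_sol T0 K G H0 Y \<xi> V)"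

lemma mild_solution_sol:
  "\<xi> \<in> H0 \<Longrightarrow> volterra_sol {0..} (\<lambda>t. T0 t (\<xi> - Y 0)) (\<lambda>s x. G (x + Y s)) (mild_solution \<xi>)"
  unfolding mild_solution_def mild_sol_iff_volterra_sol[symmetric]
  using mild_sol_exists by (rule someI_ex)

lemma traj_eq: "\<xi> \<in> H0 \<Longrightarrow> 0 \<le> s \<Longrightarrow> traj \<xi> s = mild_solution \<xi> s + Y s"
  using cocycle_eq mild_solution_sol mild_sol_iff_volterra_sol by blast

lemma traj_in: "\<xi> \<in> H0 \<Longrightarrow> 0 \<le> s \<Longrightarrow> traj \<xi> s \<in> H0"
  using traj_eq volterra_sol_in[OF mild_solution_sol] Y_in subspace by (simp add: subspace_add)

lemma continuous_on_traj:
  assumes \<xi>: "\<xi> \<in> H0"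
  shows "continuous_on {0..} (traj \<xi>)"
proof -
  have "continuous_on {0..} (\<lambda>s. mild_solution \<xi> s + Y s)"
    using volterra_sol_continuous[OF mild_solution_sol[OF \<xi>]]
    by (intro continuous_intros continuous_on_subset[OF Y_continuous]) auto
  then show ?thesis
    by (rule continuous_on_eq) (simp add: traj_eq[OF \<xi>])
qed

lemma continuous_on_DG_traj: "\<xi> \<in> H0 \<Longrightarrow> continuous_on {0..} (\<lambda>s. DG (traj \<xi> s))"
  using traj_in by (intro continuous_on_compose2[OF DG_continuous continuous_on_traj]) auto

lemma norm_DG_traj_bound:
  assumes \<xi>: "\<xi> \<in> H0"
  obtains B where "0 \<le> B" "\<And>s. s \<in> {0..T} \<Longrightarrow> norm (DG (traj \<xi> s)) \<le> B"
  using continuous_on_compact_bound[OF compact_Icc continuous_on_subset[OF continuous_on_DG_traj[OF \<xi>]]]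
  by (metis atLeastAtMost_iff atLeast_iff subsetI)

lemma volterra_admissible_linearized:
  assumes \<xi>: "\<xi> \<in> H0"
  shows "volterra_admissible T (\<lambda>s. DG (traj \<xi> s))"
  unfolding volterra_admissible_def
proof (intro conjI allI impI)
  obtain B where B: "0 \<le> B" "\<And>s. s \<in> {0..T} \<Longrightarrow> norm (DG (traj \<xi> s)) \<le> B"
    using norm_DG_traj_bound[OF \<xi>] by blast
  have "B-lipschitz_on H0 (DG (traj \<xi> s))" if "s \<in> {0..T}" for s
    using B(1) order_trans[OF norm_blinfun mult_right_mono[OF B(2)[OF that] norm_ge_zero]]
    by (auto simp: lipschitz_on_def dist_norm simp flip: blinfun.diff_right)
  then show "\<exists>L. \<forall>s\<in>{0..T}. L-lipschitz_on H0 (DG (traj \<xi> s))" by blast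
  fix v :: "real \<Rightarrow> 'a" assume "continuous_on {0..T} v"
  then show "continuous_on {0..T} (\<lambda>s. DG (traj \<xi> s) (v s))"
    by (intro blinfun.continuous_on continuous_on_subset[OF continuous_on_DG_traj[OF \<xi>]]) auto
qed

lemma T0_bound:
  obtains B where "0 \<le> B" "\<And>s x. s \<in> {0..T} \<Longrightarrow> x \<in> H0 \<Longrightarrow> norm (T0 s x) \<le> B * norm x"
proof -
  have "\<exists>B. \<forall>s\<in>{0..T}. norm (T0 s x) \<le> B" if "x \<in> H0" for x
    using continuous_on_compact_bound[OF compact_Icc continuous_on_subset[OF T0_continuous[OF that]]]
    by (metis atLeastAtMost_iff atLeast_iff subsetI)
  then show ?thesis
    using uniform_boundedness_closed_subspace[OF closed subspace] that by blast
qed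

lemma traj_volterra:
  assumes \<xi>: "\<xi> \<in> H0" and s: "0 \<le> s"
  shows "traj \<xi> s = T0 s (\<xi> - Y 0) + Y s + kernel_conv s (\<lambda>r. G (traj \<xi> r))"
proof -
  have "kernel_conv s (\<lambda>r. G (mild_solution \<xi> r + Y r)) = kernel_conv s (\<lambda>r. G (traj \<xi> r))"
    using \<xi> by (intro kernel_conv_cong) (simp add: traj_eq)
  then show ?thesis
    using volterra_sol_eq[OF mild_solution_sol[OF \<xi>], of s] traj_eq[OF \<xi> s] s by simp
qed

lemma continuous_on_G_traj: "\<xi> \<in> H0 \<Longrightarrow> continuous_on {0..} (\<lambda>s. G (traj \<xi> s))"
  using traj_in
  by (intro continuous_on_compose2[OF lipschitz_on_continuous_on[OF G_lipschitz] continuous_on_traj]) auto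

lemma traj_diff_eq:
  assumes \<xi>: "\<xi> \<in> H0" and \<zeta>: "\<zeta> \<in> H0" and s: "0 \<le> s"
  shows "traj \<zeta> s - traj \<xi> s = T0 s (\<zeta> - \<xi>) + kernel_conv s (\<lambda>r. G (traj \<zeta> r) - G (traj \<xi> r))"
  using traj_volterra[OF \<xi> s] traj_volterra[OF \<zeta> s] s
    kernel_conv_diff[OF s continuous_on_subset[OF continuous_on_G_traj[OF \<zeta>]]
      continuous_on_subset[OF continuous_on_G_traj[OF \<xi>]]]
  by (simp add: blinfun.diff_right[symmetric])

lemma traj_lipschitz:
  obtains c where "0 \<le> c"
    "\<And>\<xi> \<zeta> s. \<xi> \<in> H0 \<Longrightarrow> \<zeta> \<in> H0 \<Longrightarrow> s \<in> {0..T} \<Longrightarrow> norm (traj \<zeta> s - traj \<xi> s) \<le> c * norm (\<zeta> - \<xi>)"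
proof -
  obtain B where B: "0 \<le> B" "\<And>s x. s \<in> {0..T} \<Longrightarrow> x \<in> H0 \<Longrightarrow> norm (T0 s x) \<le> B * norm x"
    using T0_bound by blast
  show ?thesis
  proof (rule that[of "gronwall_const T L * B"])
    show "0 \<le> gronwall_const T L * B" using B(1) gronwall_const_nonneg by simp
    fix \<xi> \<zeta> s assume \<xi>: "\<xi> \<in> H0" and \<zeta>: "\<zeta> \<in> H0" and s: "s \<in> {0..T}"
    have "\<zeta> - \<xi> \<in> H0" using \<xi> \<zeta> subspace by (simp add: subspace_diff)
    have "norm (traj \<zeta> s - traj \<xi> s)
        \<le> gronwall_const T L * (B * norm (\<zeta> - \<xi>) + C * 0 * (T powr (1 - \<beta>) / (1 - \<beta>)))"
    proof (rule kernel_conv_gronwall[OF lipschitz_on_nonneg[OF G_lipschitz] _ _ _ order.refl _ _ s])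
      show "continuous_on {0..T} (\<lambda>s. traj \<zeta> s - traj \<xi> s)"
        using continuous_on_traj[OF \<xi>] continuous_on_traj[OF \<zeta>]
        by (auto intro!: continuous_intros elim!: continuous_on_subset)
      show "continuous_on {0..T} (\<lambda>s. G (traj \<zeta> s) - G (traj \<xi> s))"
        using continuous_on_G_traj[OF \<xi>] continuous_on_G_traj[OF \<zeta>]
        by (auto intro!: continuous_intros elim!: continuous_on_subset)
      show "norm (G (traj \<zeta> r) - G (traj \<xi> r)) \<le> 0 + L * norm (traj \<zeta> r - traj \<xi> r)" if "r \<in> {0..T}" for r
        using norm_G_diff_le traj_in \<xi> \<zeta> that by simp
      show "norm (traj \<zeta> r - traj \<xi> r)
          \<le> B * norm (\<zeta> - \<xi>) + norm (kernel_conv r (\<lambda>r. G (traj \<zeta> r) - G (traj \<xi> r)))"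
        if r: "r \<in> {0..T}" for r
      proof -
        have "norm (traj \<zeta> r - traj \<xi> r)
            \<le> norm (T0 r (\<zeta> - \<xi>)) + norm (kernel_conv r (\<lambda>r. G (traj \<zeta> r) - G (traj \<xi> r)))"
          unfolding traj_diff_eq[OF \<xi> \<zeta> atLeastAtMost_iff[THEN iffD1, OF r, THEN conjunct1]]
          by (rule norm_triangle_ineq)
        then show ?thesis
          using B(2)[OF r \<open>\<zeta> - \<xi> \<in> H0\<close>] by linarith
      qed
    qed (use B(1) in simp)
    then show "norm (traj \<zeta> s - traj \<xi> s) \<le> gronwall_const T L * B * norm (\<zeta> - \<xi>)"
      by (simp add: mult.assoc)
  qed
qed

definition linearized :: "'a \<Rightarrow> 'a \<Rightarrow> real \<Rightarrow> 'a" where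
  "linearized \<xi> \<eta> = (SOME Z. volterra_sol {0..} (\<lambda>t. T0 t \<eta>) (\<lambda>s. DG (traj \<xi> s)) Z)"

lemma linearized_sol:
  assumes \<xi>: "\<xi> \<in> H0" and \<eta>: "\<eta> \<in> H0"
  shows "volterra_sol {0..} (\<lambda>t. T0 t \<eta>) (\<lambda>s. DG (traj \<xi> s)) (linearized \<xi> \<eta>)"
  unfolding linearized_def
  using \<eta>
  by (intro someI_ex[OF volterra_sol_exists] volterra_admissible_linearized[OF \<xi>] T0_continuous)
      (auto intro: T0_in)

lemma linearized_linear:
  assumes \<xi>: "\<xi> \<in> H0" and \<eta>: "\<eta>1 \<in> H0" "\<eta>2 \<in> H0" and t: "0 \<le> t"
  shows "linearized \<xi> (a *\<^sub>R \<eta>1 + b *\<^sub>R \<eta>2) t = a *\<^sub>R linearized \<xi> \<eta>1 t + b *\<^sub>R linearized \<xi> \<eta>2 t"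
proof -
  let ?Z = "\<lambda>t. a *\<^sub>R linearized \<xi> \<eta>1 t + b *\<^sub>R linearized \<xi> \<eta>2 t"
  note Z1 = linearized_sol[OF \<xi> \<eta>(1)] and Z2 = linearized_sol[OF \<xi> \<eta>(2)]
  have "volterra_sol {0..} (\<lambda>t. T0 t (a *\<^sub>R \<eta>1 + b *\<^sub>R \<eta>2)) (\<lambda>s. DG (traj \<xi> s)) ?Z"
    unfolding volterra_sol_def
  proof (intro conjI ballI image_subsetI)
    show "continuous_on {0..} ?Z"
      using volterra_sol_continuous[OF Z1] volterra_sol_continuous[OF Z2] by (intro continuous_intros)
    fix s :: real assume s: "s \<in> {0..}"
    show "?Z s \<in> H0"
      using volterra_sol_in[OF Z1 s] volterra_sol_in[OF Z2 s] subspace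
      by (simp add: subspace_add subspace_scale)
    have "continuous_on {0..s} (\<lambda>r. DG (traj \<xi> r) (linearized \<xi> \<eta> r))" if "\<eta> \<in> H0" for \<eta>
      using volterra_sol_continuous[OF linearized_sol[OF \<xi> that]]
      by (intro blinfun.continuous_on continuous_on_subset[OF continuous_on_DG_traj[OF \<xi>]]) (auto
          elim: continuous_on_subset)
    then have "kernel_conv s (\<lambda>r. DG (traj \<xi> r) (?Z r))
        = kernel_conv s (\<lambda>r. a *\<^sub>R DG (traj \<xi> r) (linearized \<xi> \<eta>1 r))
          + kernel_conv s (\<lambda>r. b *\<^sub>R DG (traj \<xi> r) (linearized \<xi> \<eta>2 r))"
      using s \<eta> by (simp add: blinfun.add_right blinfun.scaleR_right kernel_conv_add continuous_on_scaleR)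
    then show "?Z s = T0 s (a *\<^sub>R \<eta>1 + b *\<^sub>R \<eta>2) + kernel_conv s (\<lambda>r. DG (traj \<xi> r) (?Z r))"
      using volterra_sol_eq[OF Z1 s] volterra_sol_eq[OF Z2 s]
      by (simp add: blinfun.add_right blinfun.scaleR_right kernel_conv_scaleR algebra_simps)
  qed
  then show ?thesis
    using volterra_sol_unique[OF volterra_admissible_linearized[OF \<xi>] linearized_sol[OF \<xi>] _ t] \<eta> subspace
    by (simp add: subspace_add subspace_scale)
qed

lemma continuous_on_DG_traj_linearized:
  assumes \<xi>: "\<xi> \<in> H0" and \<eta>: "\<eta> \<in> H0"
  shows "continuous_on {0..} (\<lambda>r. DG (traj \<xi> r) (linearized \<xi> \<eta> r))"
  by (intro blinfun.continuous_on continuous_on_DG_traj[OF \<xi>]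
      volterra_sol_continuous[OF linearized_sol[OF \<xi> \<eta>]])

lemma norm_linearized_le:
  assumes \<xi>: "\<xi> \<in> H0"
  obtains c where "0 \<le> c" "\<And>\<eta> s. \<eta> \<in> H0 \<Longrightarrow> s \<in> {0..T} \<Longrightarrow> norm (linearized \<xi> \<eta> s) \<le> c * norm \<eta>"
proof -
  obtain B where B: "0 \<le> B" "\<And>s x. s \<in> {0..T} \<Longrightarrow> x \<in> H0 \<Longrightarrow> norm (T0 s x) \<le> B * norm x"
    using T0_bound by blast
  obtain B' where B': "0 \<le> B'" "\<And>s. s \<in> {0..T} \<Longrightarrow> norm (DG (traj \<xi> s)) \<le> B'"
    using norm_DG_traj_bound[OF \<xi>] by blast
  show ?thesis
  proof (rule that[of "gronwall_const T B' * B"])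
    show "0 \<le> gronwall_const T B' * B" using B(1) gronwall_const_nonneg by simp
    fix \<eta> s assume \<eta>: "\<eta> \<in> H0" and s: "s \<in> {0..T}"
    note Z = linearized_sol[OF \<xi> \<eta>]
    have "norm (linearized \<xi> \<eta> s) \<le> gronwall_const T B' * (B * norm \<eta> + C * 0 * (T powr (1 - \<beta>) / (1 - \<beta>)))"
    proof (rule kernel_conv_gronwall[OF B'(1) _ _ _ order.refl _ _ s])
      show "continuous_on {0..T} (linearized \<xi> \<eta>)"
        using volterra_sol_continuous[OF Z] by (rule continuous_on_subset) auto
      show "continuous_on {0..T} (\<lambda>r. DG (traj \<xi> r) (linearized \<xi> \<eta> r))"
        using continuous_on_DG_traj_linearized[OF \<xi> \<eta>] by (rule continuous_on_subset) auto
      show "norm (DG (traj \<xi> r) (linearized \<xi> \<eta> r)) \<le> 0 + B' * norm (linearized \<xi> \<eta> r)" if "r \<in> {0..T}" for r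
        using order_trans[OF norm_blinfun mult_right_mono[OF B'(2)[OF that] norm_ge_zero]] by simp
      show "norm (linearized \<xi> \<eta> r)
          \<le> B * norm \<eta> + norm (kernel_conv r (\<lambda>r. DG (traj \<xi> r) (linearized \<xi> \<eta> r)))"
        if "r \<in> {0..T}" for r
        using volterra_sol_eq[OF Z, of r] B(2)[OF that \<eta>] that
          norm_triangle_ineq[of "T0 r \<eta>" "kernel_conv r (\<lambda>r. DG (traj \<xi> r) (linearized \<xi> \<eta> r))"]
        by simp
    qed (use B(1) in simp)
    then show "norm (linearized \<xi> \<eta> s) \<le> gronwall_const T B' * B * norm \<eta>"
      by (simp add: mult.assoc)
  qed
qed

lemma bounded_linear_linearized:
  assumes \<xi>: "\<xi> \<in> H0" and t: "0 \<le> t"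
  shows "bounded_linear (\<lambda>\<eta>. linearized \<xi> (orth_proj H0 \<eta>) t)"
proof -
  obtain c where c: "0 \<le> c" "\<And>\<eta> s. \<eta> \<in> H0 \<Longrightarrow> s \<in> {0..t} \<Longrightarrow> norm (linearized \<xi> \<eta> s) \<le> c * norm \<eta>"
    using norm_linearized_le[OF \<xi>] by blast
  have P: "linear (orth_proj H0)" "\<And>x. orth_proj H0 x \<in> H0"
    using bounded_linear_orth_proj[OF subspace closed] orth_proj_in[OF subspace closed]
    by (auto simp: bounded_linear.linear)
  show ?thesis
  proof (rule bounded_linear_intro[where K=c])
    fix x y :: 'a and r :: real
    show "linearized \<xi> (orth_proj H0 (x + y)) t
        = linearized \<xi> (orth_proj H0 x) t + linearized \<xi> (orth_proj H0 y) t"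
      using linearized_linear[OF \<xi> P(2) P(2) t, of 1 x 1 y] by (simp add: linear_add[OF P(1)])
    show "linearized \<xi> (orth_proj H0 (r *\<^sub>R x)) t = r *\<^sub>R linearized \<xi> (orth_proj H0 x) t"
      using linearized_linear[OF \<xi> P(2) P(2) t, of r x 0 x] by (simp add: linear_scale[OF P(1)])
    show "norm (linearized \<xi> (orth_proj H0 x) t) \<le> norm x * c"
      using c(2)[OF P(2), of t x] t norm_orth_proj_le[OF subspace closed, of x] c(1)
      by (auto simp: mult.commute intro: order_trans mult_left_mono)
  qed
qed

lemma traj_remainder_eq:
  assumes \<xi>: "\<xi> \<in> H0" and \<zeta>: "\<zeta> \<in> H0" and s: "0 \<le> s"
  shows "traj \<zeta> s - traj \<xi> s - linearized \<xi> (\<zeta> - \<xi>) s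
    = kernel_conv s (\<lambda>r. G (traj \<zeta> r) - G (traj \<xi> r) - DG (traj \<xi> r) (linearized \<xi> (\<zeta> - \<xi>) r))"
proof -
  have h: "\<zeta> - \<xi> \<in> H0" using \<xi> \<zeta> subspace by (simp add: subspace_diff)
  have "continuous_on {0..s} (\<lambda>r. G (traj \<zeta> r) - G (traj \<xi> r))"
    using continuous_on_G_traj[OF \<xi>] continuous_on_G_traj[OF \<zeta>]
    by (auto intro!: continuous_intros elim!: continuous_on_subset)
  moreover have "continuous_on {0..s} (\<lambda>r. DG (traj \<xi> r) (linearized \<xi> (\<zeta> - \<xi>) r))"
    using continuous_on_DG_traj_linearized[OF \<xi> h] by (rule continuous_on_subset) auto
  ultimately show ?thesis
    using traj_diff_eq[OF \<xi> \<zeta> s] volterra_sol_eq[OF linearized_sol[OF \<xi> h], of s] s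
    by (simp add: kernel_conv_diff)
qed

lemma traj_remainder_le:
  assumes \<xi>: "\<xi> \<in> H0" and \<zeta>: "\<zeta> \<in> H0" and s: "s \<in> {0..T}" and e: "0 \<le> e"
    and B: "0 \<le> B" "\<And>r. r \<in> {0..T} \<Longrightarrow> norm (DG (traj \<xi> r)) \<le> B"
    and lip: "\<And>r. r \<in> {0..T} \<Longrightarrow> norm (traj \<zeta> r - traj \<xi> r) \<le> c * norm (\<zeta> - \<xi>)"
    and lin: "\<And>r. r \<in> {0..T} \<Longrightarrow>
      norm (G (traj \<zeta> r) - G (traj \<xi> r) - DG (traj \<xi> r) (traj \<zeta> r - traj \<xi> r)) \<le> e * norm (traj \<zeta> r - traj \<xi> r)"
  shows "norm (traj \<zeta> s - traj \<xi> s - linearized \<xi> (\<zeta> - \<xi>) s)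
    \<le> gronwall_const T B * (C * (e * (c * norm (\<zeta> - \<xi>))) * (T powr (1 - \<beta>) / (1 - \<beta>)))"
proof -
  have h: "\<zeta> - \<xi> \<in> H0" using \<xi> \<zeta> subspace by (simp add: subspace_diff)
  define E where "E r = traj \<zeta> r - traj \<xi> r - linearized \<xi> (\<zeta> - \<xi>) r" for r
  have "norm (E s) \<le> gronwall_const T B * (0 + C * (e * (c * norm (\<zeta> - \<xi>))) * (T powr (1 - \<beta>) / (1 - \<beta>)))"
  proof (rule kernel_conv_gronwall[OF B(1) _ _ order.refl _ _ _ s])
    show "continuous_on {0..T} E"
      unfolding E_def using continuous_on_traj[OF \<xi>] continuous_on_traj[OF \<zeta>]
          volterra_sol_continuous[OF linearized_sol[OF \<xi> h]]
      by (auto intro!: continuous_intros elim!: continuous_on_subset)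
    show "continuous_on {0..T} (\<lambda>r. G (traj \<zeta> r) - G (traj \<xi> r) - DG (traj \<xi> r) (linearized \<xi> (\<zeta> - \<xi>) r))"
      using continuous_on_G_traj[OF \<xi>] continuous_on_G_traj[OF \<zeta>] continuous_on_DG_traj_linearized[OF \<xi> h]
      by (auto intro!: continuous_intros elim!: continuous_on_subset)
    show "0 \<le> e * (c * norm (\<zeta> - \<xi>))"
      using e lip[OF s] norm_ge_zero order_trans by (blast intro: mult_nonneg_nonneg)
    show "norm (E r)
        \<le> 0 + norm (kernel_conv r (\<lambda>r. G (traj \<zeta> r) - G (traj \<xi> r) - DG (traj \<xi> r) (linearized \<xi> (\<zeta> - \<xi>) r)))"
      if "r \<in> {0..T}" for r
      using traj_remainder_eq[OF \<xi> \<zeta>, of r] that by (simp add: E_def)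
    fix r assume r: "r \<in> {0..T}"
    have "G (traj \<zeta> r) - G (traj \<xi> r) - DG (traj \<xi> r) (linearized \<xi> (\<zeta> - \<xi>) r)
        = (G (traj \<zeta> r) - G (traj \<xi> r) - DG (traj \<xi> r) (traj \<zeta> r - traj \<xi> r)) + DG (traj \<xi> r) (E r)"
      by (simp add: E_def blinfun.diff_right)
    also have "norm \<dots> \<le> e * (c * norm (\<zeta> - \<xi>)) + B * norm (E r)"
    proof (rule norm_triangle_le[OF add_mono])
      show "norm (G (traj \<zeta> r) - G (traj \<xi> r) - DG (traj \<xi> r) (traj \<zeta> r - traj \<xi> r)) \<le> e * (c * norm (\<zeta> - \<xi>))"
        using lin[OF r] mult_left_mono[OF lip[OF r] e] by linarith
      show "norm (DG (traj \<xi> r) (E r)) \<le> B * norm (E r)"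
        using order_trans[OF norm_blinfun mult_right_mono[OF B(2)[OF r] norm_ge_zero]] .
    qed
    finally show "norm (G (traj \<zeta> r) - G (traj \<xi> r) - DG (traj \<xi> r) (linearized \<xi> (\<zeta> - \<xi>) r))
        \<le> e * (c * norm (\<zeta> - \<xi>)) + B * norm (E r)" .
  qed
  then show ?thesis by (simp add: E_def)
qed

lemma traj_linearization:
  assumes \<xi>: "\<xi> \<in> H0" and e: "0 < e"
  obtains d where "0 < d" "\<And>\<zeta> s. \<zeta> \<in> H0 \<Longrightarrow> norm (\<zeta> - \<xi>) < d \<Longrightarrow> s \<in> {0..T} \<Longrightarrow>
      norm (traj \<zeta> s - traj \<xi> s - linearized \<xi> (\<zeta> - \<xi>) s) \<le> e * norm (\<zeta> - \<xi>)"
proof -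
  obtain c where c: "0
      \<le> c" and lip: "\<And>\<zeta> s. \<zeta> \<in> H0 \<Longrightarrow> s \<in> {0..T} \<Longrightarrow> norm (traj \<zeta> s - traj \<xi> s) \<le> c * norm (\<zeta> - \<xi>)"
    using traj_lipschitz[of T] \<xi> by metis
  obtain B where B: "0 \<le> B" "\<And>s. s \<in> {0..T} \<Longrightarrow> norm (DG (traj \<xi> s)) \<le> B"
    using norm_DG_traj_bound[OF \<xi>] by blast
  define Q where "Q = gronwall_const T B * C * (T powr (1 - \<beta>) / (1 - \<beta>)) * c"
  have Q: "0 \<le> Q" using gronwall_const_nonneg C_nonneg c beta by (simp add: Q_def)
  define e' where "e' = e / (Q + 1)"
  have e': "0 < e'" using e Q by (simp add: e'_def)
  have "compact (traj \<xi> ` {0..T})"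
    using continuous_on_traj[OF \<xi>]
    by (intro compact_continuous_image compact_Icc) (auto elim: continuous_on_subset)
  then obtain d where d: "0 < d" and unif: "\<And>p w. p \<in> traj \<xi> ` {0..T} \<Longrightarrow> p + w \<in> H0 \<Longrightarrow> norm w < d \<Longrightarrow>
      norm (G (p + w) - G p - DG p w) \<le> e' * norm w"
    using uniform_linearization_compact[OF subspace_imp_convex[OF subspace] G_deriv DG_continuous _
        _ e'] traj_in[OF \<xi>]
    by (metis (no_types, lifting) atLeastAtMost_iff image_subset_iff)
  show ?thesis
  proof (rule that[of "d / (c + 1)"])
    show "0 < d / (c + 1)" using d c by simp
    fix \<zeta> s assume \<zeta>: "\<zeta> \<in> H0" and close: "norm (\<zeta> - \<xi>) < d / (c + 1)" and s: "s \<in> {0..T}"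
    have small: "norm (traj \<zeta> r - traj \<xi> r) < d" if "r \<in> {0..T}" for r
      using lip[OF \<zeta> that] close c d by (simp add: field_simps) (smt (verit) mult_left_mono norm_ge_zero)
    have "norm (G (traj \<zeta> r) - G (traj \<xi> r) - DG (traj \<xi> r) (traj \<zeta> r - traj \<xi> r))
        \<le> e' * norm (traj \<zeta> r - traj \<xi> r)"
      if "r \<in> {0..T}" for r
      using unif[of "traj \<xi> r" "traj \<zeta> r - traj \<xi> r"] small[OF that] traj_in[OF \<zeta>] that by auto
    then have "norm (traj \<zeta> s - traj \<xi> s - linearized \<xi> (\<zeta> - \<xi>) s) \<le> Q * e' * norm (\<zeta> - \<xi>)"
      using traj_remainder_le[OF \<xi> \<zeta> s less_imp_le[OF e'] B lip[OF \<zeta>]] by (simp add: Q_def mult_ac)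
    also have "\<dots> \<le> e * norm (\<zeta> - \<xi>)"
      using Q e by (simp add: e'_def field_simps)
    finally show "norm (traj \<zeta> s - traj \<xi> s - linearized \<xi> (\<zeta> - \<xi>) s) \<le> e * norm (\<zeta> - \<xi>)" .
  qed
qed

lemma linearized_eq_factorized_kernel:
  assumes \<xi>: "\<xi> \<in> H0" and \<eta>: "\<eta> \<in> H0" and t: "0 \<le> t"
    and K_eq: "\<And>r x. 0 < r \<Longrightarrow> K r x = P r x"
  shows "linearized \<xi> \<eta> t = T0 t \<eta> + (LINT s:{0..t}|lborel. P (t - s) (DG (traj \<xi> s) (linearized \<xi> \<eta> s)))"
proof -
  have "kernel_conv t (\<lambda>s. DG (traj \<xi> s) (linearized \<xi> \<eta> s))
      = (LINT s:{0..t}|lborel. P (t - s) (DG (traj \<xi> s) (linearized \<xi> \<eta> s)))"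
    unfolding kernel_conv_def using K_eq by (intro set_integral_Icc_cong_upper) simp
  then show ?thesis
    using volterra_sol_eq[OF linearized_sol[OF \<xi> \<eta>]] t by simp
qed

theorem has_derivative_traj:
  assumes \<xi>: "\<xi> \<in> H0" and t: "0 \<le> t"
  shows "((\<lambda>\<zeta>. traj \<zeta> t) has_derivative (\<lambda>\<eta>. linearized \<xi> (orth_proj H0 \<eta>) t)) (at \<xi> within H0)"
  unfolding has_derivative_within_alt
proof (intro conjI allI impI bounded_linear_linearized[OF \<xi> t])
  fix e :: real assume "0 < e"
  then obtain d where "0 < d" and lin: "\<And>\<zeta>. \<zeta> \<in> H0 \<Longrightarrow> norm (\<zeta> - \<xi>) < d \<Longrightarrow>
      norm (traj \<zeta> t - traj \<xi> t - linearized \<xi> (\<zeta> - \<xi>) t) \<le> e * norm (\<zeta> - \<xi>)"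
    using traj_linearization[OF \<xi>, of e t] t by (metis atLeastAtMost_iff order.refl)
  moreover have "orth_proj H0 (\<zeta> - \<xi>) = \<zeta> - \<xi>" if "\<zeta> \<in> H0" for \<zeta>
    using that \<xi> subspace by (simp add: orth_proj_id[OF subspace closed] subspace_diff)
  ultimately show "\<exists>d>0. \<forall>\<zeta>\<in>H0. norm (\<zeta> - \<xi>) < d \<longrightarrow>
      norm (traj \<zeta> t - traj \<xi> t - linearized \<xi> (orth_proj H0 (\<zeta> - \<xi>)) t) \<le> e * norm (\<zeta> - \<xi>)"
    by auto
qed

end

theorem proposition4p1:
  fixes H0 :: "'a::{real_inner,banach,second_countable_topology} set"
    and T0 :: "real \<Rightarrow> 'a \<Rightarrow>\<^sub>L 'a"
    and K :: "real \<Rightarrow> 'a \<Rightarrow>\<^sub>L 'a"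
    and Pw :: "real \<Rightarrow> real \<Rightarrow> 'a \<Rightarrow>\<^sub>L 'a"
    and Rn :: "real \<Rightarrow> 'a \<Rightarrow>\<^sub>L 'a"
    and M :: "real \<Rightarrow> real"
    and \<omega>A pstar :: real
    and Y :: "'w \<Rightarrow> real \<Rightarrow> 'a"
    and G :: "'a \<Rightarrow> 'a"
    and DG :: "'a \<Rightarrow> 'a \<Rightarrow>\<^sub>L 'a"
  assumes H0_subspace: "subspace H0" and H0_closed: "closed H0" and H0_proper: "H0 \<noteq> UNIV"
    and T0_into: "\<And>t x. t \<ge> 0 \<Longrightarrow> x \<in> H0 \<Longrightarrow> T0 t x \<in> H0"
    and T0_zero: "\<And>x. x \<in> H0 \<Longrightarrow> T0 0 x = x"
    and T0_semigroup: "\<And>t s x. t \<ge> 0 \<Longrightarrow> s \<ge> 0 \<Longrightarrow> x \<in> H0 \<Longrightarrow> T0 (t + s) x = T0 t (T0 s x)"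
    and T0_strong_cont: "\<And>x. x \<in> H0 \<Longrightarrow> continuous_on {0..} (\<lambda>t. T0 t x)"
    and pstar: "pstar \<ge> 1"
    and \<omega>A_neg: "\<omega>A < 0"
    and Rn_into: "\<And>\<beta> x. \<beta> \<in> {1 - 1/pstar<..<1} \<Longrightarrow> Rn \<beta> x \<in> H0"
    and Pw_into: "\<And>\<beta> t x. \<beta> \<in> {1 - 1/pstar<..<1} \<Longrightarrow> t > 0 \<Longrightarrow> x \<in> H0 \<Longrightarrow> Pw \<beta> t x \<in> H0"
    and Pw_bound: "\<And>\<beta> t x. \<beta> \<in> {1 - 1/pstar<..<1} \<Longrightarrow> t > 0 \<Longrightarrow> x \<in> H0 \<Longrightarrow>
        norm (Pw \<beta> t x) \<le> M \<beta> * t powr (-\<beta>) * exp (\<omega>A * t) * norm x"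
    and Pw_strong_cont: "\<And>\<beta> x. \<beta> \<in> {1 - 1/pstar<..<1} \<Longrightarrow> x \<in> H0 \<Longrightarrow>
        continuous_on {0<..} (\<lambda>t. Pw \<beta> t x)"
    and K_eq: "\<And>\<beta> t x. \<beta> \<in> {1 - 1/pstar<..<1} \<Longrightarrow> t > 0 \<Longrightarrow> K t x = Pw \<beta> t (Rn \<beta> x)"
    and Y_cont: "\<And>w. continuous_on UNIV (Y w)"
    and Y_into: "\<And>w t. Y w t \<in> H0"
    and G_lipschitz: "\<exists>L. L-lipschitz_on H0 G"
    and G_deriv: "\<And>x. x \<in> H0 \<Longrightarrow> (G has_derivative blinfun_apply (DG x)) (at x within H0)"
    and DG_cont: "continuous_on H0 DG"
  shows "\<forall>w. \<forall>\<xi>\<in>H0. \<exists>D :: real \<Rightarrow> 'a \<Rightarrow> 'a.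
           (\<forall>t>0. ((\<lambda>\<zeta>. cocycle T0 K G H0 (Y w) t \<zeta>) has_derivative D t) (at \<xi> within H0)) \<and>
           (\<forall>\<beta>\<in>{1 - 1/pstar<..<1}. \<forall>t>0. \<forall>\<eta>\<in>H0.
              D t \<eta> = T0 t \<eta> +
                (LINT s:{0..t}|lborel.
                   Pw \<beta> (t - s) (Rn \<beta> (DG (cocycle T0 K G H0 (Y w) s \<xi>) (D s \<eta>)))))"
proof (intro allI ballI)
  fix w \<xi> assume \<xi>: "\<xi> \<in> H0"
  define \<beta>0 where "\<beta>0 = 1 - 1 / (2 * pstar)"
  have \<beta>0: "\<beta>0 \<in> {1 - 1/pstar<..<1}" "0 \<le> \<beta>0"
    using pstar by (auto simp: \<beta>0_def field_simps)
  obtain L where L: "L-lipschitz_on H0 G"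
    using G_lipschitz by blast
  interpret mild_setting H0 K "\<bar>M \<beta>0\<bar> * norm (Rn \<beta>0)" \<beta>0 T0 G DG L "Y w"
  proof (rule mild_setting.intro[OF singular_kernel_factorization[where \<omega> = \<omega>A and P = "Pw \<beta>0"]])
    show "mild_setting_axioms H0 T0 G DG L (Y w)"
      using T0_into T0_strong_cont L G_deriv DG_cont Y_cont Y_into by unfold_locales
  qed (use H0_subspace H0_closed \<beta>0 \<omega>A_neg Rn_into Pw_into Pw_bound Pw_strong_cont K_eq in auto)
  have "linearized \<xi> (orth_proj H0 \<eta>) t = T0 t \<eta> +
      (LINT s:{0..t}|lborel. Pw \<beta> (t - s) (Rn \<beta> (DG (traj \<xi> s) (linearized \<xi> (orth_proj H0 \<eta>) s))))"
    if \<beta>: "\<beta> \<in> {1 - 1/pstar<..<1}" and t: "0 < t" and \<eta>: "\<eta> \<in> H0" for \<beta> t \<eta>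
    using linearized_eq_factorized_kernel[OF \<xi> \<eta>, of t "\<lambda>r x. Pw \<beta> r (Rn \<beta> x)"] K_eq[OF \<beta>] t
      orth_proj_id[OF H0_subspace H0_closed \<eta>]
    by simp
  with has_derivative_traj[OF \<xi>] show "\<exists>D :: real \<Rightarrow> 'a \<Rightarrow> 'a.
      (\<forall>t>0. ((\<lambda>\<zeta>. cocycle T0 K G H0 (Y w) t \<zeta>) has_derivative D t) (at \<xi> within H0)) \<and>
      (\<forall>\<beta>\<in>{1 - 1/pstar<..<1}. \<forall>t>0. \<forall>\<eta>\<in>H0. D t \<eta> = T0 t \<eta> +
        (LINT s:{0..t}|lborel. Pw \<beta> (t - s) (Rn \<beta> (DG (cocycle T0 K G H0 (Y w) s \<xi>) (D s \<eta>)))))"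
    by (intro exI[of _ "\<lambda>t \<eta>. linearized \<xi> (orth_proj H0 \<eta>) t"]) auto
qed

end
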